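(* Let $G=W(H_3)$, $\mu=1$, $\tau\in\mathbb C$, and let $R_1,\dots,R_5$ be the five classes of pairwise commuting reflections. Let $U=\bigoplus_{p=1}^5\mathbb Cu_p$, let $G$ act by $w(u_p)=u_q$ when $wR_pw^{-1}=R_q$, and for a reflection $s$ with $s\in R_{[s]}$ set $e_s(u_p)=\tau u_p$ if $s\in R_p$ and $e_s(u_p)=u_{[s]}$ if $s\notin R_p$. Then these operators extend to a representation $\rho_4$ of $B_G(\Upsilon)$ on $U$, and $\rho_4$ is irreducible if and only if $(\tau-1)^4(\tau+4)\neq0$.
   Context: $W(H_3)$ is the Coxeter group generated by $s_0,s_1,s_2$ with $s_i^2=1$, $(s_0s_1)^5=1$, $(s_0s_2)^2=1$, $(s_1s_2)^3=1$, realized as a real reflection group on $\mathbb C^3$; order 120, 15 reflections, all conjugate. Commuting is an equivalence relation on the reflections with 5 classes $R_1,\dots,R_5$ of 3 pairwise commuting reflections; $G$ permutes these classes transitively by conjugation. $e_s$ is the generator for the hyperplane of $s$; $T_w$ written $w$. Parameters: single $\mu=1$, single $\tau$. $B_G(\Upsilon)$ is the unital $\mathbb C$-algebra generated by $T_w$ ($T_1=1$) and $e_s$ with relations: $T_{w_1}T_{w_2}=T_{w_1w_2}$; $se_s=e_ss=e_s$; $T_we_s=e_sT_w=e_s$ if $w$ stabilizes $H_s$ and $H_s\cap V_w$ ($V_w$ the fixed space) is a noncrossing codimension-2 edge; $e_s^2=\tau e_s$; $we_s=e_{wsw^{-1}}w$; $e_se_{s'}=e_{s'}e_s$ if $H_s\pitchfork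 H_{s'}$; for $s\ne s'$ with $H_s\cap H_{s'}$ noncrossing, $e_se_{s'}=(\sum_{r\in R(s,s')}r)e_{s'}=e_s(\sum_{r\in R(s,s')}r)$, $R(s,s')=\{r: rs'r=s\}$, product $0$ if $R(s,s')=\emptyset$. $H_s\pitchfork H_{s'}$ means the only reflecting hyperplanes containing $H_s\cap H_{s'}$ are $H_s,H_{s'}$; a codimension-2 edge is crossing iff it is such an intersection. *)

theory Defs
  imports "HOL-Analysis.Analysis"
begin

type_synonym mat3 = "real^3^3"
type_synonym cls = "mat3 set"
type_synonym vecU = "cls \<Rightarrow> complex"

text \<open>Gram matrix of the standard bilinear form for the Coxeter matrix with
  m01 = 5, m02 = 2, m12 = 3: entries -cos(pi/m_ij), diagonal 1.\<close>
definition H3gram :: "3 \<Rightarrow> 3 \<Rightarrow> real" where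
  "H3gram i j = (if i = j then 1
     else if {i, j} = {0, 1} then - cos (pi / 5)
     else if {i, j} = {1, 2} then - cos (pi / 3)
     else 0)"

text \<open>Simple reflection s_i: v \<mapsto> v - 2 B(alpha_i, v) alpha_i (coordinates in basis alpha).\<close>
definition sgen :: "3 \<Rightarrow> mat3" where
  "sgen i = (\<chi> j k. (if j = k then 1 else 0) - (if j = i then 2 * H3gram i k else 0))"

inductive_set WH3 :: "mat3 set" where
  one: "mat 1 \<in> WH3"
| step: "g \<in> WH3 \<Longrightarrow> g ** sgen i \<in> WH3"

definition Refl :: "mat3 set" where
  "Refl = {w ** sgen i ** matrix_inv w | w i. w \<in> WH3}"

definition Fix :: "mat3 \<Rightarrow> (real^3) set" where
  "Fix w = {v. w *v v = v}"

abbreviation Hyp :: "mat3 \<Rightarrow> (real^3) set" where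
  "Hyp s \<equiv> Fix s"

text \<open>Codimension-2 edges of the arrangement (in rank 3 these are exactly the
  intersections of two distinct reflecting hyperplanes).\<close>
definition codim2_edge :: "(real^3) set \<Rightarrow> bool" where
  "codim2_edge X \<longleftrightarrow> (\<exists>s\<in>Refl. \<exists>s'\<in>Refl. Hyp s \<noteq> Hyp s' \<and> X = Hyp s \<inter> Hyp s')"

definition transversal :: "mat3 \<Rightarrow> mat3 \<Rightarrow> bool" where
  "transversal s s' \<longleftrightarrow> Hyp s \<noteq> Hyp s' \<and>
     (\<forall>r\<in>Refl. Hyp s \<inter> Hyp s' \<subseteq> Hyp r \<longrightarrow> Hyp r = Hyp s \<or> Hyp r = Hyp s')"

definition crossing_edge :: "(real^3) set \<Rightarrow> bool" where
  "crossing_edge X \<longleftrightarrow> (\<exists>s\<in>Refl. \<exists>s'\<in>Refl. transversal s s' \<and> X = Hyp s \<inter> Hyp s')"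

definition noncrossing_edge :: "(real^3) set \<Rightarrow> bool" where
  "noncrossing_edge X \<longleftrightarrow> codim2_edge X \<and> \<not> crossing_edge X"

definition stabilizes :: "mat3 \<Rightarrow> (real^3) set \<Rightarrow> bool" where
  "stabilizes w X \<longleftrightarrow> (\<lambda>v. w *v v) ` X = X"

definition Rset :: "mat3 \<Rightarrow> mat3 \<Rightarrow> mat3 set" where
  "Rset s s' = {r \<in> Refl. r ** s' ** r = s}"

definition cls_of :: "mat3 \<Rightarrow> cls" where
  "cls_of s = {r \<in> Refl. r ** s = s ** r}"

definition Classes :: "cls set" where
  "Classes = cls_of ` Refl"

text \<open>U = free C-module on the classes, as functions supported on Classes.\<close>
definition Uspace :: "vecU set" where
  "Uspace = {v. \<forall>q. q \<notin> Classes \<longrightarrow> v q = 0}"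

text \<open>Linear operator on U sending u_p to img p.\<close>
definition lin_op :: "(cls \<Rightarrow> vecU) \<Rightarrow> vecU \<Rightarrow> vecU" where
  "lin_op img v = (\<lambda>q. if q \<in> Classes then (\<Sum>p\<in>Classes. v p * img p q) else 0)"

definition ubasis :: "cls \<Rightarrow> vecU" where
  "ubasis p = (\<lambda>q. if q = p then 1 else 0)"

definition T4 :: "mat3 \<Rightarrow> vecU \<Rightarrow> vecU" where
  "T4 w = lin_op (\<lambda>p. ubasis ((\<lambda>r. w ** r ** matrix_inv w) ` p))"

definition E4 :: "complex \<Rightarrow> mat3 \<Rightarrow> vecU \<Rightarrow> vecU" where
  "E4 \<tau> s = lin_op (\<lambda>p. if s \<in> p then (\<lambda>q. \<tau> * ubasis p q) else ubasis (cls_of s))"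

text \<open>An assignment T (for T_w) and E (for e_s) of operators on U satisfies all
  defining relations of B_G(Upsilon), i.e. extends to an algebra representation.\<close>
definition is_rep :: "complex \<Rightarrow> (mat3 \<Rightarrow> vecU \<Rightarrow> vecU) \<Rightarrow> (mat3 \<Rightarrow> vecU \<Rightarrow> vecU) \<Rightarrow> bool" where
  "is_rep \<tau> T E \<longleftrightarrow>
     (\<forall>w\<in>WH3. \<forall>v\<in>Uspace. T w v \<in> Uspace) \<and>
     (\<forall>s\<in>Refl. \<forall>v\<in>Uspace. E s v \<in> Uspace) \<and>
     (\<forall>v\<in>Uspace. T (mat 1) v = v) \<and>
     (\<forall>w1\<in>WH3. \<forall>w2\<in>WH3. \<forall>v\<in>Uspace. T w1 (T w2 v) = T (w1 ** w2) v) \<and>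
     (\<forall>s\<in>Refl. \<forall>v\<in>Uspace. T s (E s v) = E s v \<and> E s (T s v) = E s v) \<and>
     (\<forall>w\<in>WH3. \<forall>s\<in>Refl. stabilizes w (Hyp s) \<and> noncrossing_edge (Hyp s \<inter> Fix w) \<longrightarrow>
        (\<forall>v\<in>Uspace. T w (E s v) = E s v \<and> E s (T w v) = E s v)) \<and>
     (\<forall>s\<in>Refl. \<forall>v\<in>Uspace. E s (E s v) = (\<lambda>q. \<tau> * E s v q)) \<and>
     (\<forall>w\<in>WH3. \<forall>s\<in>Refl. \<forall>v\<in>Uspace. T w (E s v) = E (w ** s ** matrix_inv w) (T w v)) \<and>
     (\<forall>s\<in>Refl. \<forall>s'\<in>Refl. transversal s s' \<longrightarrow>
        (\<forall>v\<in>Uspace. E s (E s' v) = E s' (E s v))) \<and>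
     (\<forall>s\<in>Refl. \<forall>s'\<in>Refl. s \<noteq> s' \<and> noncrossing_edge (Hyp s \<inter> Hyp s') \<longrightarrow>
        (\<forall>v\<in>Uspace.
           E s (E s' v) = (\<lambda>q. \<Sum>r\<in>Rset s s'. T r (E s' v) q) \<and>
           E s (E s' v) = E s (\<lambda>q. \<Sum>r\<in>Rset s s'. T r v q)))"

definition csubspace :: "vecU set \<Rightarrow> bool" where
  "csubspace W \<longleftrightarrow> (\<lambda>_. 0) \<in> W \<and> (\<forall>x\<in>W. \<forall>y\<in>W. (\<lambda>q. x q + y q) \<in> W) \<and>
     (\<forall>c. \<forall>x\<in>W. (\<lambda>q. c * x q) \<in> W)"

text \<open>Irreducible: the only subspaces of U invariant under all generators
  T_w and e_s (hence under the whole algebra) are 0 and U.\<close>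
definition rep_irreducible :: "(mat3 \<Rightarrow> vecU \<Rightarrow> vecU) \<Rightarrow> (mat3 \<Rightarrow> vecU \<Rightarrow> vecU) \<Rightarrow> bool" where
  "rep_irreducible T E \<longleftrightarrow> Uspace \<noteq> {\<lambda>_. 0} \<and>
     (\<forall>W. csubspace W \<and> W \<subseteq> Uspace \<and> (\<forall>w\<in>WH3. \<forall>v\<in>W. T w v \<in> W) \<and>
          (\<forall>s\<in>Refl. \<forall>v\<in>W. E s v \<in> W) \<longrightarrow> W = {\<lambda>_. 0} \<or> W = Uspace)"

end

theory Submission
  imports Defs
begin

text \<open>
  The group \<open>W(H\<^sub>3)\<close> is generated by three explicit real matrices whose
  entries lie in \<open>\<int>[\<phi>]\<close>, \<open>\<phi> = 2 cos (\<pi>/5)\<close>.  Since \<open>1, \<phi>\<close> are \<open>\<int>\<close>-linearly independent,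
  matrices over \<open>\<int>[\<phi>]\<close> can be compared by evaluation.  We list the 15 reflections together
  with certificates checked by evaluation (conjugation table, hyperplane and edge vectors,
  unique conjugators, transitivity of commuting, class representatives) and derive:
  \<open>Refl\<close> is exactly this list; commuting is an equivalence relation with 5 classes permuted
  transitively by \<open>W\<close>; two distinct reflections are transversal iff they commute, and for
  noncommuting \<open>s, s'\<close> the set \<open>R(s, s')\<close> is a single reflection.
  In coordinates, \<open>T4 w\<close> permutes the basis of \<open>U\<close> and
  \<open>e\<^sub>s v = ((\<tau> - 1) v\<^bsub>[s]\<^esub> + \<Sum>\<^sub>p v\<^sub>p) u\<^bsub>[s]\<^esub>\<close>; every defining relation of \<open>B\<^sub>G(\<Upsilon>)\<close> then
  reduces to these facts.  For irreducibility: if \<open>\<tau> \<notin> {1, -4}\<close> any nonzero invariant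
  subspace contains some \<open>u\<^sub>p\<close> and hence all of \<open>U\<close>; for \<open>\<tau> = 1\<close> the sum-zero hyperplane and
  for \<open>\<tau> = -4\<close> the constant vectors are proper invariant subspaces.
\<close>


section \<open>The golden ratio and exact arithmetic in \<open>\<int>[\<phi>]\<close>\<close>

text \<open>The Gram matrix of \<open>H\<^sub>3\<close> involves \<open>cos (\<pi>/5) = \<phi>/2\<close>, so all matrices of the group
  have entries in \<open>\<int>[\<phi>]\<close>.  Since \<open>\<phi>\<close> is irrational, an element \<open>a + b\<phi>\<close> is determined by
  the integer pair \<open>(a, b)\<close>, which makes equality of such matrices decidable by evaluation.\<close>

definition phi :: real where "phi = 2 * cos (pi / 5)"

lemma phi_squared: "phi * phi = phi + 1"
proof -
  define c where "c = cos (pi / 5)"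
  have c3: "cos (3 * (pi / 5)) = 4 * c ^ 3 - 3 * c" unfolding c_def by (rule cos_treble_cos)
  have c2: "cos (2 * (pi / 5)) = 2 * c ^ 2 - 1" unfolding c_def by (rule cos_double_cos)
  have "cos (3 * (pi / 5)) = - cos (2 * (pi / 5))"
    using cos_pi_minus[of "2 * (pi / 5)"] by (simp add: algebra_simps)
  then have cubic: "4 * c ^ 3 - 3 * c = - (2 * c ^ 2 - 1)" using c3 c2 by simp
  have "c > 0" unfolding c_def by (rule cos_gt_zero_pi) (use pi_gt_zero in linarith)+
  moreover have "(c + 1) * (4 * c ^ 2 - 2 * c - 1) = 0"
    using cubic by (simp add: algebra_simps power2_eq_square power3_eq_cube)
  ultimately have "4 * c ^ 2 - 2 * c - 1 = 0" by simp
  then show ?thesis unfolding phi_def c_def[symmetric] by (simp add: algebra_simps power2_eq_square)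
qed

text \<open>The quadratic form \<open>a\<^sup>2 + ab - b\<^sup>2\<close> (the norm form of \<open>\<int>[\<phi>]\<close>) has no nontrivial
  integer zero: a zero forces \<open>a, b\<close> even, and infinite descent applies.\<close>
lemma golden_norm_zero: "(a::int)^2 + a*b - b^2 = 0 \<Longrightarrow> a = 0 \<and> b = 0"
proof (induction "nat (\<bar>a\<bar> + \<bar>b\<bar>)" arbitrary: a b rule: less_induct)
  case less
  show ?case
  proof (cases "a = 0 \<and> b = 0")
    case False
    have "even a \<and> even b"
    proof (rule ccontr)
      assume "\<not> (even a \<and> even b)"
      then have "odd (a^2 + a*b - b^2)" by auto
      with less.prems show False by simp
    qed
    then obtain a' b' where ab: "a = 2*a'" "b = 2*b'" by (auto elim!: evenE)
    have "4 * (a'^2 + a'*b' - b'^2) = 0" using less.prems ab by (simp add: algebra_simps power2_eq_square)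
    then have half: "a'^2 + a'*b' - b'^2 = 0" by simp
    have "nat (\<bar>a'\<bar> + \<bar>b'\<bar>) < nat (\<bar>a\<bar> + \<bar>b\<bar>)" using False ab by auto
    from less.hyps[OF this half] ab False show ?thesis by simp
  qed simp
qed

lemma phi_int_independent: "of_int a + of_int b * phi = 0 \<Longrightarrow> a = 0 \<and> b = 0"
proof -
  assume h: "of_int a + of_int b * phi = 0"
  define A :: real where "A = of_int a"
  define B :: real where "B = of_int b"
  have Bphi: "B * phi = - A" using h unfolding A_def B_def by (simp add: add_eq_0_iff)
  have "A * A = B * B * (phi * phi)" using Bphi by (metis minus_mult_minus mult.commute mult.left_commute)
  also have "\<dots> = B * (B * phi) + B * B" by (simp add: phi_squared algebra_simps)
  finally have "A * A = B * (- A) + B * B" using Bphi by simp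
  then have "of_int (a^2 + a*b - b^2) = (0::real)" unfolding A_def B_def by (simp add: algebra_simps power2_eq_square)
  then show ?thesis by (intro golden_norm_zero) (simp only: of_int_eq_0_iff)
qed

text \<open>Elements of \<open>\<int>[\<phi>]\<close> as pairs \<open>(a, b) \<mapsto> a + b\<phi>\<close>, with the ring operations coming
  from \<open>\<phi>\<^sup>2 = \<phi> + 1\<close>; 3\<times>3 matrices and 3-vectors over \<open>\<int>[\<phi>]\<close> are nested lists.\<close>
type_synonym zphi = "int \<times> int"
type_synonym zmat = "zphi list list"
type_synonym zvec = "zphi list"

fun zphi_add :: "zphi \<Rightarrow> zphi \<Rightarrow> zphi" where
  "zphi_add (a, b) (c, d) = (a + c, b + d)"
fun zphi_mul :: "zphi \<Rightarrow> zphi \<Rightarrow> zphi" where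
  "zphi_mul (a, b) (c, d) = (a*c + b*d, a*d + b*c + b*d)"
definition zphi_val :: "zphi \<Rightarrow> real" where
  "zphi_val x = of_int (fst x) + of_int (snd x) * phi"

lemma zphi_val_add: "zphi_val (zphi_add x y) = zphi_val x + zphi_val y"
  by (cases x; cases y) (simp add: zphi_val_def algebra_simps)

lemma zphi_val_mul: "zphi_val (zphi_mul x y) = zphi_val x * zphi_val y"
proof (cases x; cases y)
  fix a b c d assume "x = (a, b)" "y = (c, d)"
  then show ?thesis
    by (simp add: zphi_val_def algebra_simps) (simp add: mult.assoc[symmetric] phi_squared, simp add: algebra_simps)
qed

lemma zphi_val_inj: "zphi_val x = zphi_val y \<Longrightarrow> x = y"
proof (cases x; cases y)
  fix a b c d assume xy: "x = (a, b)" "y = (c, d)" and "zphi_val x = zphi_val y"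
  then have "of_int (a - c) + of_int (b - d) * phi = 0" by (simp add: zphi_val_def algebra_simps)
  from phi_int_independent[OF this] xy show ?thesis by simp
qed

text \<open>Indexing: the coordinates \<open>0, 1, 2 :: 3\<close> correspond to list positions \<open>0, 1, 2\<close>.\<close>
definition idx3 :: "3 \<Rightarrow> nat" where "idx3 i = (if i = 1 then 1 else if i = 2 then 2 else 0)"

lemma three_cases: "(i::3) = 0 \<or> i = 1 \<or> i = 2"
  using exhaust_3[of i] by auto
lemma idx3_simps[simp]: "idx3 0 = 0" "idx3 1 = 1" "idx3 2 = 2" "idx3 3 = 0"
  by (simp_all add: idx3_def)
lemma idx3_lt: "idx3 i < 3" by (simp add: idx3_def)
lemma forall3: "(\<forall>i::3. P i) \<longleftrightarrow> P 0 \<and> P 1 \<and> P 2"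
  using three_cases by metis
lemma sum3: "sum f (UNIV::3 set) = f 0 + f 1 + f 2"
proof -
  have three_zero: "(3::3) = 0" by simp
  show ?thesis by (simp add: sum_3 three_zero add_ac)
qed

definition zmat_mult :: "zmat \<Rightarrow> zmat \<Rightarrow> zmat" where
  "zmat_mult A B = map (\<lambda>i. map (\<lambda>j. zphi_add (zphi_add (zphi_mul (A!i!0) (B!0!j))
      (zphi_mul (A!i!1) (B!1!j))) (zphi_mul (A!i!2) (B!2!j))) [0,1,2]) [0,1,2]"
definition zmat_vec :: "zmat \<Rightarrow> zvec \<Rightarrow> zvec" where
  "zmat_vec A v = map (\<lambda>i. zphi_add (zphi_add (zphi_mul (A!i!0) (v!0))
      (zphi_mul (A!i!1) (v!1))) (zphi_mul (A!i!2) (v!2))) [0,1,2]"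
definition zmat_val :: "zmat \<Rightarrow> mat3" where
  "zmat_val A = (\<chi> i j. zphi_val (A ! idx3 i ! idx3 j))"
definition zvec_val :: "zvec \<Rightarrow> real^3" where
  "zvec_val v = (\<chi> i. zphi_val (v ! idx3 i))"

lemma zmat_val_mult: "zmat_val (zmat_mult A B) = zmat_val A ** zmat_val B"
  unfolding zmat_val_def matrix_matrix_mult_def
  by (simp add: vec_eq_iff forall3 sum3 zmat_mult_def zphi_val_add zphi_val_mul)

lemma zvec_val_mult: "zvec_val (zmat_vec A v) = zmat_val A *v zvec_val v"
  unfolding zmat_val_def zvec_val_def matrix_vector_mult_def
  by (simp add: vec_eq_iff forall3 sum3 zmat_vec_def zphi_val_add zphi_val_mul)

definition zvec_differ :: "zvec \<Rightarrow> zvec \<Rightarrow> bool" where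
  "zvec_differ u v \<longleftrightarrow> u!0 \<noteq> v!0 \<or> u!1 \<noteq> v!1 \<or> u!2 \<noteq> v!2"

lemma zvec_differ_val: "zvec_differ u v \<Longrightarrow> zvec_val u \<noteq> zvec_val v"
proof
  assume "zvec_differ u v" "zvec_val u = zvec_val v"
  then have "\<And>i. zphi_val (u ! idx3 i) = zphi_val (v ! idx3 i)" by (simp add: zvec_val_def vec_eq_iff)
  then have "\<And>i. u ! idx3 i = v ! idx3 i" using zphi_val_inj by blast
  from this[of 0] this[of 1] this[of 2] \<open>zvec_differ u v\<close> show False by (simp add: zvec_differ_def)
qed

section \<open>The fifteen reflections of \<open>W(H\<^sub>3)\<close>: data and certificates\<close>

definition gen_zmat :: "nat \<Rightarrow> zmat" where
  "gen_zmat n = (if n = 0 then [[(-1,0),(0,1),(0,0)],[(0,0),(1,0),(0,0)],[(0,0),(0,0),(1,0)]]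
     else if n = 1 then [[(1,0),(0,0),(0,0)],[(0,1),(-1,0),(1,0)],[(0,0),(0,0),(1,0)]]
     else [[(1,0),(0,0),(0,0)],[(0,0),(1,0),(0,0)],[(0,0),(1,0),(-1,0)]])"

lemma sgen_gen_zmat: "sgen i = zmat_val (gen_zmat (idx3 i))"
proof -
  have d01: "{a,b} = {0,1::3} \<longleftrightarrow> (a = 0 \<and> b = 1) \<or> (a = 1 \<and> b = 0)" for a b
    by (auto simp: doubleton_eq_iff)
  have d12: "{a,b} = {1,2::3} \<longleftrightarrow> (a = 1 \<and> b = 2) \<or> (a = 2 \<and> b = 1)" for a b
    by (auto simp: doubleton_eq_iff)
  have "cos (pi / 5) = phi / 2" by (simp add: phi_def)
  then show ?thesis
    unfolding vec_eq_iff sgen_def zmat_val_def using three_cases[of i]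
    by (auto simp: forall3 H3gram_def d01 d12 cos_60 gen_zmat_def zphi_val_def)
qed

text \<open>The list of all 15 reflections (the first three are the simple ones), together with:
  the conjugation table (\<open>r\<^sub>k r\<^sub>j r\<^sub>k = r\<^bsub>conj_table!k!j\<^esub>\<close>); two vectors spanning each
  reflecting hyperplane; for each commuting pair a vector on their common edge lying on no
  third hyperplane; and for each noncommuting pair the unique reflection conjugating one to
  the other.\<close>

definition refl_zmats :: "zmat list" where "refl_zmats = [[[((-1),0),(0,1),(0,0)],[(0,0),(1,0),(0,0)],[(0,0),(0,0),(1,0)]],
  [[(1,0),(0,0),(0,0)],[(0,1),((-1),0),(1,0)],[(0,0),(0,0),(1,0)]],
  [[(1,0),(0,0),(0,0)],[(0,0),(1,0),(0,0)],[(0,0),(1,0),((-1),0)]],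
  [[(0,1),(0,(-1)),(0,1)],[(1,0),(0,(-1)),(1,1)],[(0,0),(0,0),(1,0)]],
  [[(0,(-1)),(1,0),(0,1)],[(0,(-1)),(0,1),(1,0)],[(0,0),(0,0),(1,0)]],
  [[(1,0),(0,0),(0,0)],[(0,1),(0,0),((-1),0)],[(0,1),((-1),0),(0,0)]],
  [[(0,0),((-1),0),(1,1)],[((-1),0),(0,0),(1,1)],[(0,0),(0,0),(1,0)]],
  [[(0,1),(0,0),(0,(-1))],[(1,0),(1,0),((-1),(-1))],[(1,0),(0,0),(0,(-1))]],
  [[(0,(-1)),(1,1),(0,(-1))],[(0,(-1)),(1,1),((-1),0)],[(0,(-1)),(0,1),(0,0)]],
  [[(0,0),(0,1),((-1),(-1))],[((-1),0),(1,1),((-1),(-1))],[((-1),0),(0,1),(0,(-1))]],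
  [[(1,1),((-1),(-1)),(1,0)],[(1,1),(0,(-2)),(0,1)],[(1,0),(0,(-1)),(0,1)]],
  [[(1,1),(0,(-1)),((-1),0)],[(1,1),(0,(-1)),(0,(-1))],[(0,1),(0,(-1)),(0,0)]],
  [[(0,(-1)),(0,0),(0,1)],[((-1),(-1)),(1,0),(0,1)],[((-1),0),(0,0),(0,1)]],
  [[(0,(-1)),(0,1),(0,(-1))],[((-1),(-1)),(1,1),(0,(-1))],[(0,(-1)),(1,0),(0,0)]],
  [[(1,0),(0,(-1)),(0,0)],[(0,0),((-1),0),(0,0)],[(0,0),((-1),0),(1,0)]]]"

definition conj_table :: "nat list list" where "conj_table = [[0,4,2,6,1,8,3,9,5,7,12,13,10,11,14],
  [3,1,5,0,6,2,4,7,10,11,8,9,12,14,13],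
  [0,5,2,7,8,1,9,3,4,6,11,10,13,12,14],
  [4,6,10,3,0,5,1,11,12,14,2,7,8,13,9],
  [6,3,8,1,4,12,0,13,2,9,10,14,5,7,11],
  [7,2,1,3,11,5,10,0,9,8,6,4,14,13,12],
  [1,0,12,4,3,10,6,14,8,13,5,11,2,9,7],
  [8,1,11,10,13,9,14,7,0,5,3,2,12,4,6],
  [9,13,4,12,2,7,6,5,8,0,14,11,3,1,10],
  [5,11,13,14,4,0,12,8,7,9,10,1,6,2,3],
  [12,14,7,11,4,6,5,2,13,9,10,3,0,8,1],
  [13,9,3,2,12,14,6,10,8,1,7,11,4,0,5],
  [10,1,9,8,14,11,13,7,3,2,0,5,12,6,4],
  [11,10,6,3,7,5,2,4,14,12,1,0,9,13,8],
  [0,8,2,9,5,4,7,6,1,3,13,12,11,10,14]]"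

definition hyp_vec1 :: "zvec list" where "hyp_vec1 = [[(0,1),(2,0),(0,0)],[(1,0),(0,0),(0,(-1))],[((-2),0),(0,0),(0,0)],[(0,1),(0,0),(1,(-1))],[(0,1),(0,0),(1,1)],[((-1),0),(0,0),(0,(-1))],[(1,1),(0,0),(1,0)],[(0,(-1)),(0,0),(1,(-1))],[(0,(-1)),(0,0),(1,1)],[((-1),(-1)),(0,0),(1,0)],[(1,0),(0,0),(0,(-1))],[((-1),0),(0,0),(0,(-1))],[(0,1),(0,0),(1,1)],[(0,(-1)),(0,0),(1,1)],[(0,(-1)),(0,0),(0,0)]]"

definition hyp_vec2 :: "zvec list" where "hyp_vec2 = [[(0,0),(0,0),(0,(-1))],[(0,0),(1,0),(2,0)],[(0,0),((-2),0),((-1),0)],[(0,0),(0,1),(0,1)],[(0,0),(0,1),((-1),0)],[(0,0),((-1),0),(1,0)],[(0,0),(1,1),(1,0)],[(0,0),(0,(-1)),(0,0)],[(0,0),(0,(-1)),((-1),(-1))],[(0,0),((-1),(-1)),(0,(-1))],[(0,0),(1,0),(1,1)],[(0,0),((-1),0),(0,1)],[(0,0),(0,1),(0,0)],[(0,0),(0,(-1)),(0,(-1))],[(0,0),(0,0),(0,1)]]"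

definition edge_vec :: "zvec list list" where "edge_vec = [[[(0,0),(0,0),(0,0)],[(0,0),(0,0),(0,0)],[(0,1),(2,0),(1,0)],[(0,0),(0,0),(0,0)],[(0,0),(0,0),(0,0)],[(0,0),(0,0),(0,0)],[(0,0),(0,0),(0,0)],[(0,0),(0,0),(0,0)],[(0,0),(0,0),(0,0)],[(0,0),(0,0),(0,0)],[(0,0),(0,0),(0,0)],[(0,0),(0,0),(0,0)],[(0,0),(0,0),(0,0)],[(0,0),(0,0),(0,0)],[(0,0),(0,0),((-1),0)]],
 [[(0,0),(0,0),(0,0)],[(0,0),(0,0),(0,0)],[(0,0),(0,0),(0,0)],[(0,0),(0,0),(0,0)],[(0,0),(0,0),(0,0)],[(0,0),(0,0),(0,0)],[(0,0),(0,0),(0,0)],[(1,1),(1,1),(1,0)],[(0,0),(0,0),(0,0)],[(0,0),(0,0),(0,0)],[(0,0),(0,0),(0,0)],[(0,0),(0,0),(0,0)],[(1,(-1)),((-1),0),((-1),0)],[(0,0),(0,0),(0,0)],[(0,0),(0,0),(0,0)]],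
 [[(0,1),(2,0),(1,0)],[(0,0),(0,0),(0,0)],[(0,0),(0,0),(0,0)],[(0,0),(0,0),(0,0)],[(0,0),(0,0),(0,0)],[(0,0),(0,0),(0,0)],[(0,0),(0,0),(0,0)],[(0,0),(0,0),(0,0)],[(0,0),(0,0),(0,0)],[(0,0),(0,0),(0,0)],[(0,0),(0,0),(0,0)],[(0,0),(0,0),(0,0)],[(0,0),(0,0),(0,0)],[(0,0),(0,0),(0,0)],[(2,0),(0,0),(0,0)]],
 [[(0,0),(0,0),(0,0)],[(0,0),(0,0),(0,0)],[(0,0),(0,0),(0,0)],[(0,0),(0,0),(0,0)],[(0,0),(0,0),(0,0)],[(1,1),(1,1),(0,1)],[(0,0),(0,0),(0,0)],[(0,0),(0,0),(0,0)],[(0,0),(0,0),(0,0)],[(0,0),(0,0),(0,0)],[(0,0),(0,0),(0,0)],[(0,0),(0,0),(0,0)],[(0,0),(0,0),(0,0)],[(0,0),(0,(-1)),(0,(-1))],[(0,0),(0,0),(0,0)]],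
 [[(0,0),(0,0),(0,0)],[(0,0),(0,0),(0,0)],[(0,0),(0,0),(0,0)],[(0,0),(0,0),(0,0)],[(0,0),(0,0),(0,0)],[(0,0),(0,0),(0,0)],[(0,0),(0,0),(0,0)],[(0,0),(0,0),(0,0)],[(0,0),(0,0),(0,0)],[(0,(-1)),((-1),(-1)),((-1),0)],[(1,0),(1,0),(1,0)],[(0,0),(0,0),(0,0)],[(0,0),(0,0),(0,0)],[(0,0),(0,0),(0,0)],[(0,0),(0,0),(0,0)]],
 [[(0,0),(0,0),(0,0)],[(0,0),(0,0),(0,0)],[(0,0),(0,0),(0,0)],[(1,1),(1,1),(0,1)],[(0,0),(0,0),(0,0)],[(0,0),(0,0),(0,0)],[(0,0),(0,0),(0,0)],[(0,0),(0,0),(0,0)],[(0,0),(0,0),(0,0)],[(0,0),(0,0),(0,0)],[(0,0),(0,0),(0,0)],[(0,0),(0,0),(0,0)],[(0,0),(0,0),(0,0)],[(1,(-1)),((-1),0),(0,0)],[(0,0),(0,0),(0,0)]],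
 [[(0,0),(0,0),(0,0)],[(0,0),(0,0),(0,0)],[(0,0),(0,0),(0,0)],[(0,0),(0,0),(0,0)],[(0,0),(0,0),(0,0)],[(0,0),(0,0),(0,0)],[(0,0),(0,0),(0,0)],[(0,0),(0,0),(0,0)],[(0,(-1)),((-1),(-1)),(0,(-1))],[(0,0),(0,0),(0,0)],[(0,0),(0,0),(0,0)],[(1,1),(0,1),(0,1)],[(0,0),(0,0),(0,0)],[(0,0),(0,0),(0,0)],[(0,0),(0,0),(0,0)]],
 [[(0,0),(0,0),(0,0)],[(1,1),(1,1),(1,0)],[(0,0),(0,0),(0,0)],[(0,0),(0,0),(0,0)],[(0,0),(0,0),(0,0)],[(0,0),(0,0),(0,0)],[(0,0),(0,0),(0,0)],[(0,0),(0,0),(0,0)],[(0,0),(0,0),(0,0)],[(0,0),(0,0),(0,0)],[(0,0),(0,0),(0,0)],[(0,0),(0,0),(0,0)],[(0,0),(0,(-1)),(0,0)],[(0,0),(0,0),(0,0)],[(0,0),(0,0),(0,0)]],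
 [[(0,0),(0,0),(0,0)],[(0,0),(0,0),(0,0)],[(0,0),(0,0),(0,0)],[(0,0),(0,0),(0,0)],[(0,0),(0,0),(0,0)],[(0,0),(0,0),(0,0)],[(0,(-1)),((-1),(-1)),(0,(-1))],[(0,0),(0,0),(0,0)],[(0,0),(0,0),(0,0)],[(0,0),(0,0),(0,0)],[(0,0),(0,0),(0,0)],[(1,0),(1,0),(0,0)],[(0,0),(0,0),(0,0)],[(0,0),(0,0),(0,0)],[(0,0),(0,0),(0,0)]],
 [[(0,0),(0,0),(0,0)],[(0,0),(0,0),(0,0)],[(0,0),(0,0),(0,0)],[(0,0),(0,0),(0,0)],[(0,(-1)),((-1),(-1)),((-1),0)],[(0,0),(0,0),(0,0)],[(0,0),(0,0),(0,0)],[(0,0),(0,0),(0,0)],[(0,0),(0,0),(0,0)],[(0,0),(0,0),(0,0)],[(1,1),(0,1),(0,0)],[(0,0),(0,0),(0,0)],[(0,0),(0,0),(0,0)],[(0,0),(0,0),(0,0)],[(0,0),(0,0),(0,0)]],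
 [[(0,0),(0,0),(0,0)],[(0,0),(0,0),(0,0)],[(0,0),(0,0),(0,0)],[(0,0),(0,0),(0,0)],[(1,0),(1,0),(1,0)],[(0,0),(0,0),(0,0)],[(0,0),(0,0),(0,0)],[(0,0),(0,0),(0,0)],[(0,0),(0,0),(0,0)],[(1,1),(0,1),(0,0)],[(0,0),(0,0),(0,0)],[(0,0),(0,0),(0,0)],[(0,0),(0,0),(0,0)],[(0,0),(0,0),(0,0)],[(0,0),(0,0),(0,0)]],
 [[(0,0),(0,0),(0,0)],[(0,0),(0,0),(0,0)],[(0,0),(0,0),(0,0)],[(0,0),(0,0),(0,0)],[(0,0),(0,0),(0,0)],[(0,0),(0,0),(0,0)],[(1,1),(0,1),(0,1)],[(0,0),(0,0),(0,0)],[(1,0),(1,0),(0,0)],[(0,0),(0,0),(0,0)],[(0,0),(0,0),(0,0)],[(0,0),(0,0),(0,0)],[(0,0),(0,0),(0,0)],[(0,0),(0,0),(0,0)],[(0,0),(0,0),(0,0)]],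
 [[(0,0),(0,0),(0,0)],[(1,(-1)),((-1),0),((-1),0)],[(0,0),(0,0),(0,0)],[(0,0),(0,0),(0,0)],[(0,0),(0,0),(0,0)],[(0,0),(0,0),(0,0)],[(0,0),(0,0),(0,0)],[(0,0),(0,(-1)),(0,0)],[(0,0),(0,0),(0,0)],[(0,0),(0,0),(0,0)],[(0,0),(0,0),(0,0)],[(0,0),(0,0),(0,0)],[(0,0),(0,0),(0,0)],[(0,0),(0,0),(0,0)],[(0,0),(0,0),(0,0)]],
 [[(0,0),(0,0),(0,0)],[(0,0),(0,0),(0,0)],[(0,0),(0,0),(0,0)],[(0,0),(0,(-1)),(0,(-1))],[(0,0),(0,0),(0,0)],[(1,(-1)),((-1),0),(0,0)],[(0,0),(0,0),(0,0)],[(0,0),(0,0),(0,0)],[(0,0),(0,0),(0,0)],[(0,0),(0,0),(0,0)],[(0,0),(0,0),(0,0)],[(0,0),(0,0),(0,0)],[(0,0),(0,0),(0,0)],[(0,0),(0,0),(0,0)],[(0,0),(0,0),(0,0)]],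
 [[(0,0),(0,0),((-1),0)],[(0,0),(0,0),(0,0)],[(2,0),(0,0),(0,0)],[(0,0),(0,0),(0,0)],[(0,0),(0,0),(0,0)],[(0,0),(0,0),(0,0)],[(0,0),(0,0),(0,0)],[(0,0),(0,0),(0,0)],[(0,0),(0,0),(0,0)],[(0,0),(0,0),(0,0)],[(0,0),(0,0),(0,0)],[(0,0),(0,0),(0,0)],[(0,0),(0,0),(0,0)],[(0,0),(0,0),(0,0)],[(0,0),(0,0),(0,0)]]]"

definition conjugator :: "nat list list" where "conjugator = [[0,6,0,1,3,9,4,5,7,8,12,13,10,11,0],
 [6,0,5,4,0,2,3,0,14,11,13,9,0,8,10],
 [0,5,0,11,8,1,13,10,4,12,3,7,6,9,0],
 [1,4,11,0,6,0,0,2,12,14,7,10,8,0,9],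
 [3,0,8,6,0,14,1,13,2,0,0,5,11,7,12],
 [9,2,1,0,14,0,10,8,0,7,6,12,4,0,11],
 [4,3,13,0,1,10,0,14,0,2,5,0,9,12,7],
 [5,0,10,2,13,8,14,0,9,0,11,3,0,4,6],
 [7,14,4,12,2,0,0,9,0,5,1,0,3,10,13],
 [8,11,12,14,0,7,2,0,5,0,0,1,13,6,3],
 [12,13,3,7,0,6,5,11,1,0,0,2,0,14,8],
 [13,9,7,10,5,12,0,3,0,1,2,0,14,0,4],
 [10,0,6,8,11,4,9,0,3,13,0,14,0,2,5],
 [11,8,9,0,7,0,12,4,10,6,14,0,2,0,1],
 [0,10,0,9,12,11,7,6,13,3,8,4,5,1,0]]"

definition zmat_id :: zmat where "zmat_id = [[(1,0),(0,0),(0,0)],[(0,0),(1,0),(0,0)],[(0,0),(0,0),(1,0)]]"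

lemma cert_conj_table: "list_all (\<lambda>k. list_all (\<lambda>j.
    zmat_mult (zmat_mult (refl_zmats!k) (refl_zmats!j)) (refl_zmats!k) = refl_zmats!(conj_table!k!j)
    \<and> conj_table!k!j < 15) [0..<15]) [0..<15]"
  by code_simp
lemma cert_involution: "list_all (\<lambda>k. zmat_mult (refl_zmats!k) (refl_zmats!k) = zmat_id) [0..<15]"
  by code_simp
lemma cert_generators: "refl_zmats!0 = gen_zmat 0 \<and> refl_zmats!1 = gen_zmat 1 \<and> refl_zmats!2 = gen_zmat 2"
  by code_simp
lemma cert_generated: "list_all (\<lambda>k. 3 \<le> k \<longrightarrow>
    list_ex (\<lambda>j. list_ex (\<lambda>k'. conj_table!j!k' = k) [0..<k]) [0..<3]) [0..<15]"
  by code_simp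
lemma cert_hyperplanes: "list_all (\<lambda>i.
    zmat_vec (refl_zmats!i) (hyp_vec1!i) = hyp_vec1!i \<and> zmat_vec (refl_zmats!i) (hyp_vec2!i) = hyp_vec2!i \<and>
    list_all (\<lambda>j. i \<noteq> j \<longrightarrow> zvec_differ (zmat_vec (refl_zmats!j) (hyp_vec1!i)) (hyp_vec1!i)
                          \<or> zvec_differ (zmat_vec (refl_zmats!j) (hyp_vec2!i)) (hyp_vec2!i)) [0..<15]) [0..<15]"
  by code_simp
lemma cert_edges: "list_all (\<lambda>i. list_all (\<lambda>j. i \<noteq> j \<and> conj_table!i!j = j \<longrightarrow>
    zmat_vec (refl_zmats!i) (edge_vec!i!j) = edge_vec!i!j \<and> zmat_vec (refl_zmats!j) (edge_vec!i!j) = edge_vec!i!j \<and>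
    list_all (\<lambda>k. k \<noteq> i \<and> k \<noteq> j \<longrightarrow> zvec_differ (zmat_vec (refl_zmats!k) (edge_vec!i!j)) (edge_vec!i!j)) [0..<15])
    [0..<15]) [0..<15]"
  by code_simp
lemma cert_conjugator: "list_all (\<lambda>i. list_all (\<lambda>j. i \<noteq> j \<and> conj_table!i!j \<noteq> j \<longrightarrow>
    conjugator!i!j < 15 \<and> conj_table!(conjugator!i!j)!j = i \<and>
    list_all (\<lambda>k. conj_table!k!j = i \<longrightarrow> k = conjugator!i!j) [0..<15]) [0..<15]) [0..<15]"
  by code_simp
lemma cert_commuting: "list_all (\<lambda>i. list_all (\<lambda>j. list_all (\<lambda>k.
    conj_table!i!j = j \<longrightarrow> conj_table!k!i = i \<longrightarrow> conj_table!k!j = j) [0..<15]) [0..<15]) [0..<15]"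
  by code_simp
lemma cert_class_reps:
  "list_all (\<lambda>i. list_ex (\<lambda>k. conj_table!k!i = i) [0,1,3,4,6]) [0..<15]
   \<and> list_all (\<lambda>i. list_all (\<lambda>j. i \<noteq> j \<longrightarrow> conj_table!i!j \<noteq> j) [0,1,3,4,6]) [0,1,3,4,6]"
  by code_simp


definition rmat :: "nat \<Rightarrow> mat3" where "rmat k = zmat_val (refl_zmats ! k)"

lemma list_all_upt: "list_all P [0..<n] \<longleftrightarrow> (\<forall>k<n. P k)"
  by (auto simp: list_all_iff)

lemma zmat_val_id: "zmat_val zmat_id = mat 1"
  by (simp add: zmat_val_def zmat_id_def vec_eq_iff forall3 mat_def zphi_val_def)

lemma rmat_conj_table: "k < 15 \<Longrightarrow> j < 15 \<Longrightarrow> rmat k ** rmat j ** rmat k = rmat (conj_table!k!j)"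
  using cert_conj_table unfolding list_all_upt rmat_def by (simp add: zmat_val_mult[symmetric])

lemma conj_table_lt: "k < 15 \<Longrightarrow> j < 15 \<Longrightarrow> conj_table!k!j < 15"
  using cert_conj_table unfolding list_all_upt by simp

lemma rmat_involution: "k < 15 \<Longrightarrow> rmat k ** rmat k = mat 1"
  using cert_involution unfolding list_all_upt rmat_def by (simp add: zmat_val_mult[symmetric] zmat_val_id)

lemma sgen_rmat: "sgen i = rmat (idx3 i)"
proof -
  have "idx3 i = 0 \<or> idx3 i = 1 \<or> idx3 i = 2" using three_cases[of i] by auto
  then show ?thesis using cert_generators by (auto simp: sgen_gen_zmat rmat_def)
qed

lemma rmat_generator: "j < 3 \<Longrightarrow> \<exists>i. rmat j = sgen i"
proof -
  assume "j < 3"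
  then have "j = idx3 0 \<or> j = idx3 1 \<or> j = idx3 2" by auto
  then show ?thesis using sgen_rmat by metis
qed

text \<open>Distinct reflections have distinct hyperplanes: the two certified vectors spanning
  \<open>Fix r\<^sub>i\<close> are not both fixed by any other \<open>r\<^sub>j\<close>.\<close>
lemma rmat_Fix_inj:
  assumes i: "i < 15" and j: "j < 15" and eq: "Fix (rmat i) = Fix (rmat j)"
  shows "i = j"
proof (rule ccontr)
  assume "i \<noteq> j"
  let ?a = "zvec_val (hyp_vec1!i)" and ?b = "zvec_val (hyp_vec2!i)"
  have "rmat i *v ?a = ?a \<and> rmat i *v ?b = ?b"
    using cert_hyperplanes i unfolding list_all_upt rmat_def by (simp add: zvec_val_mult[symmetric])
  moreover have "rmat j *v ?a \<noteq> ?a \<or> rmat j *v ?b \<noteq> ?b"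
    using cert_hyperplanes i j \<open>i \<noteq> j\<close> unfolding list_all_upt rmat_def
    by (auto simp: zvec_val_mult[symmetric] dest!: zvec_differ_val)
  ultimately show False using eq by (auto simp: Fix_def)
qed

lemma rmat_inj: "i < 15 \<Longrightarrow> j < 15 \<Longrightarrow> rmat i = rmat j \<Longrightarrow> i = j"
  using rmat_Fix_inj by metis

lemma rmat_edge:
  assumes "i < 15" "j < 15" "i \<noteq> j" "conj_table!i!j = j"
  obtains e where "rmat i *v e = e" "rmat j *v e = e" "\<And>k. k < 15 \<Longrightarrow> k \<noteq> i \<Longrightarrow> k \<noteq> j \<Longrightarrow> rmat k *v e \<noteq> e"
proof
  let ?e = "zvec_val (edge_vec!i!j)"
  have cert: "zmat_vec (refl_zmats!i) (edge_vec!i!j) = edge_vec!i!j \<and>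
      zmat_vec (refl_zmats!j) (edge_vec!i!j) = edge_vec!i!j \<and>
      (\<forall>k<15. k \<noteq> i \<and> k \<noteq> j \<longrightarrow> zvec_differ (zmat_vec (refl_zmats!k) (edge_vec!i!j)) (edge_vec!i!j))"
    using cert_edges assms unfolding list_all_upt by simp
  then show "rmat i *v ?e = ?e" "rmat j *v ?e = ?e"
    unfolding rmat_def by (simp_all add: zvec_val_mult[symmetric])
  fix k assume "k < 15" "k \<noteq> i" "k \<noteq> j"
  then show "rmat k *v ?e \<noteq> ?e"
    using cert unfolding rmat_def by (auto simp: zvec_val_mult[symmetric] dest!: zvec_differ_val)
qed

lemma conjugator_unique: "i < 15 \<Longrightarrow> j < 15 \<Longrightarrow> i \<noteq> j \<Longrightarrow> conj_table!i!j \<noteq> j \<Longrightarrow>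
   conjugator!i!j < 15 \<and> conj_table!(conjugator!i!j)!j = i \<and> (\<forall>k<15. conj_table!k!j = i \<longrightarrow> k = conjugator!i!j)"
  using cert_conjugator unfolding list_all_upt by simp

lemma conj_table_comm_trans:
  "i < 15 \<Longrightarrow> j < 15 \<Longrightarrow> k < 15 \<Longrightarrow> conj_table!i!j = j \<Longrightarrow> conj_table!k!i = i \<Longrightarrow> conj_table!k!j = j"
  using cert_commuting unfolding list_all_upt by blast

text \<open>\<open>WH3\<close> is closed under products and inverses (generators are involutions).\<close>

lemma WH3_mult: "h \<in> WH3 \<Longrightarrow> g \<in> WH3 \<Longrightarrow> g ** h \<in> WH3"
proof (induction h rule: WH3.induct)
  case (step h i)
  then have "g ** h ** sgen i \<in> WH3" by (intro WH3.step) simp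
  then show ?case by (simp add: matrix_mul_assoc)
qed simp

lemma sgen_WH3: "sgen i \<in> WH3"
  using WH3.step[OF WH3.one, of i] by simp

lemma sgen_involution: "sgen i ** sgen i = mat 1"
  using rmat_involution[of "idx3 i"] idx3_lt[of i] by (simp add: sgen_rmat)

text \<open>\<open>matrix_inv\<close> is a choice operator, so a two-sided inverse determines it.\<close>
lemma matrix_inv_unique: "A ** B = mat 1 \<Longrightarrow> B ** A = mat 1 \<Longrightarrow> matrix_inv (A::mat3) = B"
proof -
  assume h: "A ** B = mat 1" "B ** A = mat 1"
  let ?C = "matrix_inv A"
  have C: "A ** ?C = mat 1 \<and> ?C ** A = mat 1"
    unfolding matrix_inv_def by (rule someI[of _ B]) (use h in simp)
  have "?C = ?C ** (A ** B)" by (simp add: h)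
  also have "\<dots> = (?C ** A) ** B" by (simp add: matrix_mul_assoc)
  also have "\<dots> = B" using C by simp
  finally show ?thesis .
qed

lemma matrix_inv_one: "matrix_inv (mat 1 :: mat3) = mat 1"
  by (rule matrix_inv_unique) simp_all

lemma WH3_inverse_exists: "w \<in> WH3 \<Longrightarrow> \<exists>w'\<in>WH3. w ** w' = mat 1 \<and> w' ** w = mat 1"
proof (induction w rule: WH3.induct)
  case one then show ?case using WH3.one by auto
next
  case (step g i)
  then obtain g' where g': "g' \<in> WH3" "g ** g' = mat 1" "g' ** g = mat 1" by auto
  have "(g ** sgen i) ** (sgen i ** g') = mat 1" "(sgen i ** g') ** (g ** sgen i) = mat 1"
    by (simp_all add: matrix_mul_assoc) (simp_all add: matrix_mul_assoc[symmetric] sgen_involution g')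
  then show ?case using WH3_mult[OF g'(1) sgen_WH3] by blast
qed

lemma WH3_inv: "w \<in> WH3 \<Longrightarrow> matrix_inv w \<in> WH3 \<and> w ** matrix_inv w = mat 1 \<and> matrix_inv w ** w = mat 1"
  using WH3_inverse_exists[of w] matrix_inv_unique by metis

lemma WH3_inv_inv: "w \<in> WH3 \<Longrightarrow> matrix_inv (matrix_inv w) = w"
  using WH3_inv[of w] matrix_inv_unique by metis

lemma WH3_inv_mult: "a \<in> WH3 \<Longrightarrow> b \<in> WH3 \<Longrightarrow> matrix_inv (a ** b) = matrix_inv b ** matrix_inv a"
proof (rule matrix_inv_unique)
  assume a: "a \<in> WH3" and b: "b \<in> WH3"
  have "a ** b ** (matrix_inv b ** matrix_inv a) = a ** (b ** matrix_inv b) ** matrix_inv a"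
    "matrix_inv b ** matrix_inv a ** (a ** b) = matrix_inv b ** (matrix_inv a ** a) ** b"
    by (simp_all add: matrix_mul_assoc)
  then show "a ** b ** (matrix_inv b ** matrix_inv a) = mat 1"
    "matrix_inv b ** matrix_inv a ** (a ** b) = mat 1"
    using WH3_inv[OF a] WH3_inv[OF b] by simp_all
qed

definition wconj :: "mat3 \<Rightarrow> mat3 \<Rightarrow> mat3" where "wconj w r = w ** r ** matrix_inv w"

lemma wconj_mult: "w \<in> WH3 \<Longrightarrow> wconj w a ** wconj w b = wconj w (a ** b)"
proof -
  assume w: "w \<in> WH3"
  have "wconj w a ** wconj w b = w ** a ** (matrix_inv w ** w) ** b ** matrix_inv w"
    by (simp add: wconj_def matrix_mul_assoc)
  then show ?thesis using WH3_inv[OF w] by (simp add: wconj_def matrix_mul_assoc)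
qed

lemma wconj_comp: "a \<in> WH3 \<Longrightarrow> b \<in> WH3 \<Longrightarrow> wconj (a ** b) x = wconj a (wconj b x)"
  by (simp add: wconj_def WH3_inv_mult matrix_mul_assoc)

lemma wconj_inv_cancel: "w \<in> WH3 \<Longrightarrow> wconj (matrix_inv w) (wconj w x) = x"
proof -
  assume w: "w \<in> WH3"
  have "wconj (matrix_inv w) (wconj w x) = (matrix_inv w ** w) ** x ** (matrix_inv w ** w)"
    using WH3_inv_inv[OF w] by (simp add: wconj_def matrix_mul_assoc)
  then show ?thesis using WH3_inv[OF w] by simp
qed

lemma wconj_cancel_inv: "w \<in> WH3 \<Longrightarrow> wconj w (wconj (matrix_inv w) x) = x"
  using wconj_inv_cancel[of "matrix_inv w" x] WH3_inv WH3_inv_inv by metis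

lemma wconj_involution: "s ** s = mat 1 \<Longrightarrow> wconj s x = s ** x ** s"
  using matrix_inv_unique[of s s] by (simp add: wconj_def)

lemma Fix_wconj: "w \<in> WH3 \<Longrightarrow> Fix (wconj w r) = (\<lambda>v. w *v v) ` Fix r"
proof
  assume w: "w \<in> WH3"
  note inv = WH3_inv[OF w]
  show "Fix (wconj w r) \<subseteq> (\<lambda>v. w *v v) ` Fix r"
  proof
    fix v assume "v \<in> Fix (wconj w r)"
    then have fixed: "(w ** r ** matrix_inv w) *v v = v" by (simp add: Fix_def wconj_def)
    let ?u = "matrix_inv w *v v"
    have "r *v ?u = matrix_inv w *v ((w ** r ** matrix_inv w) *v v)"
      by (simp add: matrix_vector_mul_assoc matrix_mul_assoc inv)
    then have "?u \<in> Fix r" using fixed by (simp add: Fix_def)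
    moreover have "v = w *v ?u" by (simp add: matrix_vector_mul_assoc inv)
    ultimately show "v \<in> (\<lambda>v. w *v v) ` Fix r" by blast
  qed
  show "(\<lambda>v. w *v v) ` Fix r \<subseteq> Fix (wconj w r)"
  proof
    fix x assume "x \<in> (\<lambda>v. w *v v) ` Fix r"
    then obtain u where u: "r *v u = u" "x = w *v u" by (auto simp: Fix_def)
    have "(w ** r ** matrix_inv w) *v (w *v u) = w *v (r *v ((matrix_inv w ** w) *v u))"
      by (simp add: matrix_vector_mul_assoc matrix_mul_assoc)
    then show "x \<in> Fix (wconj w r)" using u inv by (simp add: Fix_def wconj_def)
  qed
qed

lemma wconj_Refl: "w \<in> WH3 \<Longrightarrow> r \<in> Refl \<Longrightarrow> wconj w r \<in> Refl"
proof -
  assume w: "w \<in> WH3" and "r \<in> Refl"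
  then obtain u i where u: "u \<in> WH3" "r = wconj u (sgen i)" by (auto simp: Refl_def wconj_def)
  then have "wconj w r = wconj (w ** u) (sgen i)" by (simp add: wconj_comp w)
  then show ?thesis using WH3_mult[OF u(1) w] by (auto simp: Refl_def wconj_def)
qed

lemma Refl_WH3: "r \<in> Refl \<Longrightarrow> r \<in> WH3"
proof -
  assume "r \<in> Refl"
  then obtain w i where "w \<in> WH3" "r = w ** sgen i ** matrix_inv w" by (auto simp: Refl_def)
  then show ?thesis using WH3_inv[of w] by (simp add: WH3_mult sgen_WH3)
qed

lemma sgen_Refl: "sgen i \<in> Refl"
  unfolding Refl_def using WH3.one matrix_inv_one by force

lemma wconj_rmat: "w \<in> WH3 \<Longrightarrow> k < 15 \<Longrightarrow> \<exists>k'<15. wconj w (rmat k) = rmat k'"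
proof (induction w arbitrary: k rule: WH3.induct)
  case one then show ?case by (auto simp: wconj_def matrix_inv_one)
next
  case (step g j)
  have "wconj (g ** sgen j) (rmat k) = wconj g (rmat (idx3 j) ** rmat k ** rmat (idx3 j))"
    using wconj_comp[OF step.hyps sgen_WH3] wconj_involution[OF sgen_involution] by (simp add: sgen_rmat)
  also have "\<dots> = wconj g (rmat (conj_table ! idx3 j ! k))"
    using rmat_conj_table idx3_lt[of j] step.prems by simp
  moreover have "conj_table ! idx3 j ! k < 15"
    using conj_table_lt idx3_lt[of j] step.prems by simp
  ultimately show ?case using step.IH by metis
qed

text \<open>Each listed matrix is a reflection: \<open>r\<^sub>0, r\<^sub>1, r\<^sub>2\<close> are the simple reflections and
  every later \<open>r\<^sub>k\<close> is a conjugate of an earlier one by a simple reflection.\<close>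
lemma rmat_Refl: "k < 15 \<Longrightarrow> rmat k \<in> Refl"
proof (induction k rule: less_induct)
  case (less k)
  show ?case
  proof (cases "k < 3")
    case True then show ?thesis using rmat_generator sgen_Refl by metis
  next
    case False
    then obtain j k' where jk: "j < 3" "k' < k" "conj_table!j!k' = k"
      using cert_generated less.prems unfolding list_all_upt by (auto simp: list_ex_iff)
    obtain i where i: "rmat j = sgen i" using rmat_generator[OF jk(1)] by blast
    have "rmat k = wconj (sgen i) (rmat k')"
      using rmat_conj_table[of j k'] jk less.prems i wconj_involution[OF sgen_involution] by simp
    then show ?thesis using wconj_Refl[OF sgen_WH3 less.IH] jk less.prems by simp
  qed
qed

lemma Refl_eq: "Refl = rmat ` {..<15}"
proof
  show "Refl \<subseteq> rmat ` {..<15}"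
  proof
    fix x assume "x \<in> Refl"
    then obtain w i where "w \<in> WH3" "x = wconj w (rmat (idx3 i))" by (auto simp: Refl_def wconj_def sgen_rmat)
    moreover have "idx3 i < 15" using idx3_lt[of i] by simp
    ultimately show "x \<in> rmat ` {..<15}" using wconj_rmat by blast
  qed
  show "rmat ` {..<15} \<subseteq> Refl" using rmat_Refl by auto
qed

lemma Refl_cases: "r \<in> Refl \<Longrightarrow> \<exists>k<15. r = rmat k"
  using Refl_eq by auto
lemma finite_Refl: "finite Refl"
  by (simp add: Refl_eq)
lemma Refl_involution: "r \<in> Refl \<Longrightarrow> r ** r = mat 1"
  using Refl_cases rmat_involution by blast
lemma Refl_wconj_self: "r \<in> Refl \<Longrightarrow> wconj r x = r ** x ** r"
  using Refl_involution wconj_involution by blast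

lemma Refl_Fix_inj: "s \<in> Refl \<Longrightarrow> t \<in> Refl \<Longrightarrow> Fix s = Fix t \<Longrightarrow> s = t"
  using Refl_cases rmat_Fix_inj by metis

lemma rmat_commute_iff: "k < 15 \<Longrightarrow> i < 15 \<Longrightarrow> rmat k ** rmat i = rmat i ** rmat k \<longleftrightarrow> conj_table!k!i = i"
proof
  assume k: "k < 15" and i: "i < 15" and c: "rmat k ** rmat i = rmat i ** rmat k"
  have "rmat k ** rmat i ** rmat k = rmat i ** (rmat k ** rmat k)" by (simp add: c matrix_mul_assoc)
  then have "rmat (conj_table!k!i) = rmat i" using rmat_conj_table[OF k i] rmat_involution[OF k] by simp
  then show "conj_table!k!i = i" using rmat_inj conj_table_lt[OF k i] i by blast
next
  assume k: "k < 15" and i: "i < 15" and t: "conj_table!k!i = i"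
  have "rmat k ** rmat i = rmat k ** rmat i ** (rmat k ** rmat k)" by (simp add: rmat_involution[OF k])
  also have "\<dots> = (rmat k ** rmat i ** rmat k) ** rmat k" by (simp add: matrix_mul_assoc)
  finally show "rmat k ** rmat i = rmat i ** rmat k" using rmat_conj_table[OF k i] t by simp
qed

lemma Refl_commute_trans:
  assumes "r \<in> Refl" "s \<in> Refl" "t \<in> Refl" "r ** s = s ** r" "s ** t = t ** s"
  shows "r ** t = t ** r"
proof -
  obtain a b c where abc: "a < 15" "b < 15" "c < 15" "r = rmat a" "s = rmat b" "t = rmat c"
    using Refl_cases assms(1-3) by metis
  have "conj_table!a!b = b" "conj_table!b!c = c" using assms(4,5) rmat_commute_iff abc by simp_all
  then have "conj_table!a!c = c" using conj_table_comm_trans[of b c a] abc by simp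
  then show ?thesis using rmat_commute_iff abc by simp
qed

lemma cls_of_self: "s \<in> Refl \<Longrightarrow> s \<in> cls_of s"
  by (simp add: cls_of_def)

lemma cls_of_eq_iff: "s \<in> Refl \<Longrightarrow> t \<in> Refl \<Longrightarrow> cls_of s = cls_of t \<longleftrightarrow> s ** t = t ** s"
proof
  assume "s \<in> Refl" "t \<in> Refl" "cls_of s = cls_of t"
  then have "s \<in> cls_of t" using cls_of_self by blast
  then show "s ** t = t ** s" by (simp add: cls_of_def)
next
  assume s: "s \<in> Refl" and t: "t \<in> Refl" and st: "s ** t = t ** s"
  show "cls_of s = cls_of t"
    unfolding cls_of_def using Refl_commute_trans[OF _ s t _ st] Refl_commute_trans[OF _ t s _ st[symmetric]] by auto
qed

lemma cls_of_Classes: "s \<in> Refl \<Longrightarrow> cls_of s \<in> Classes"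
  by (simp add: Classes_def)

lemma mem_Classes_iff: "s \<in> Refl \<Longrightarrow> p \<in> Classes \<Longrightarrow> s \<in> p \<longleftrightarrow> p = cls_of s"
proof -
  assume s: "s \<in> Refl" and "p \<in> Classes"
  then obtain t where t: "t \<in> Refl" "p = cls_of t" by (auto simp: Classes_def)
  have "s \<in> cls_of t \<longleftrightarrow> s ** t = t ** s" using s by (simp add: cls_of_def)
  also have "\<dots> \<longleftrightarrow> cls_of t = cls_of s" using cls_of_eq_iff[OF s t(1)] by auto
  finally show ?thesis using t by simp
qed

lemma finite_Classes: "finite Classes"
  unfolding Classes_def using finite_Refl by simp

lemma card_Classes: "card Classes = 5"
proof -
  let ?reps = "{0, 1, 3, 4, 6::nat}"
  have reps: "\<forall>i<15. \<exists>k\<in>?reps. conj_table!k!i = i"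
    and distinct: "\<forall>i\<in>?reps. \<forall>j\<in>?reps. i \<noteq> j \<longrightarrow> conj_table!i!j \<noteq> j"
    using cert_class_reps unfolding list_all_upt by (auto simp: list_all_iff list_ex_iff)
  have same_cls: "cls_of (rmat k) = cls_of (rmat i) \<longleftrightarrow> conj_table!k!i = i" if "k < 15" "i < 15" for k i
    using cls_of_eq_iff[OF rmat_Refl rmat_Refl] rmat_commute_iff that by simp
  have "Classes = (\<lambda>k. cls_of (rmat k)) ` ?reps"
  proof
    show "(\<lambda>k. cls_of (rmat k)) ` ?reps \<subseteq> Classes" using rmat_Refl cls_of_Classes by auto
    show "Classes \<subseteq> (\<lambda>k. cls_of (rmat k)) ` ?reps"
    proof
      fix p assume "p \<in> Classes"
      then obtain i where i: "i < 15" "p = cls_of (rmat i)" using Refl_cases by (auto simp: Classes_def)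
      then obtain k where "k \<in> ?reps" "conj_table!k!i = i" using reps by blast
      then show "p \<in> (\<lambda>k. cls_of (rmat k)) ` ?reps" using same_cls[of k i] i by force
    qed
  qed
  moreover have "inj_on (\<lambda>k. cls_of (rmat k)) ?reps"
    using distinct same_cls by (intro inj_onI) auto
  ultimately have "card Classes = card ?reps" using card_image by metis
  then show ?thesis by simp
qed

definition conj_cls :: "mat3 \<Rightarrow> cls \<Rightarrow> cls" where "conj_cls w p = wconj w ` p"

lemma wconj_commute_iff:
  "w \<in> WH3 \<Longrightarrow> wconj w r ** wconj w s = wconj w s ** wconj w r \<longleftrightarrow> r ** s = s ** r"
  using wconj_mult[of w] wconj_inv_cancel[of w] by metis

lemma conj_cls_cls_of: "w \<in> WH3 \<Longrightarrow> s \<in> Refl \<Longrightarrow> conj_cls w (cls_of s) = cls_of (wconj w s)"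
proof
  assume w: "w \<in> WH3" and s: "s \<in> Refl"
  show "conj_cls w (cls_of s) \<subseteq> cls_of (wconj w s)"
    using wconj_commute_iff[OF w] wconj_Refl[OF w] by (auto simp: conj_cls_def cls_of_def)
  show "cls_of (wconj w s) \<subseteq> conj_cls w (cls_of s)"
  proof
    fix x assume x: "x \<in> cls_of (wconj w s)"
    let ?y = "wconj (matrix_inv w) x"
    have iw: "matrix_inv w \<in> WH3" using WH3_inv[OF w] by simp
    have "x = wconj w ?y" using wconj_cancel_inv[OF w] by simp
    moreover have "?y \<in> cls_of s"
      using x wconj_commute_iff[OF iw, of x "wconj w s"] wconj_inv_cancel[OF w] wconj_Refl[OF iw]
      by (auto simp: cls_of_def)
    ultimately show "x \<in> conj_cls w (cls_of s)" by (auto simp: conj_cls_def)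
  qed
qed

lemma conj_cls_Classes: "w \<in> WH3 \<Longrightarrow> p \<in> Classes \<Longrightarrow> conj_cls w p \<in> Classes"
  by (auto simp: Classes_def conj_cls_cls_of wconj_Refl)

lemma conj_cls_inv_cancel: "w \<in> WH3 \<Longrightarrow> p \<in> Classes \<Longrightarrow> conj_cls (matrix_inv w) (conj_cls w p) = p"
  by (auto simp: conj_cls_def image_image wconj_inv_cancel)

lemma conj_cls_cancel_inv: "w \<in> WH3 \<Longrightarrow> p \<in> Classes \<Longrightarrow> conj_cls w (conj_cls (matrix_inv w) p) = p"
  by (auto simp: conj_cls_def image_image wconj_cancel_inv)

lemma conj_cls_comp: "a \<in> WH3 \<Longrightarrow> b \<in> WH3 \<Longrightarrow> conj_cls (a ** b) p = conj_cls a (conj_cls b p)"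
  by (simp add: conj_cls_def wconj_comp image_image)

lemma conj_cls_one: "conj_cls (mat 1) p = p"
  by (simp add: conj_cls_def wconj_def matrix_inv_one)

text \<open>All reflections are conjugate (to \<open>r\<^sub>0\<close>), so the group permutes the classes transitively.\<close>
lemma Refl_conjugate_rmat0: "s \<in> Refl \<Longrightarrow> \<exists>u\<in>WH3. s = wconj u (rmat 0)"
proof -
  assume "s \<in> Refl"
  then obtain w i where w: "w \<in> WH3" "s = wconj w (rmat (idx3 i))" by (auto simp: Refl_def wconj_def sgen_rmat)
  have r5: "rmat 5 \<in> WH3" and r6: "rmat 6 \<in> WH3" using Refl_WH3 rmat_Refl by auto
  have c1: "rmat 1 = wconj (rmat 6) (rmat 0)"
    using rmat_conj_table[of 6 0] Refl_wconj_self[OF rmat_Refl[of 6]] by (simp add: conj_table_def)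
  have c2: "rmat 2 = wconj (rmat 5 ** rmat 6) (rmat 0)"
    using rmat_conj_table[of 5 1] Refl_wconj_self[OF rmat_Refl[of 5]] c1 wconj_comp[OF r5 r6]
    by (simp add: conj_table_def)
  have c0: "rmat 0 = wconj (mat 1) (rmat 0)" by (simp add: wconj_def matrix_inv_one)
  have "idx3 i = 0 \<or> idx3 i = 1 \<or> idx3 i = 2" using three_cases[of i] by auto
  then obtain u where u: "u \<in> WH3" "rmat (idx3 i) = wconj u (rmat 0)"
    using c0 c1 c2 WH3.one r6 WH3_mult[OF r6 r5] by metis
  then have "s = wconj (w ** u) (rmat 0)" using w wconj_comp by simp
  then show ?thesis using WH3_mult[OF u(1) w(1)] by blast
qed

lemma Classes_transitive: "p \<in> Classes \<Longrightarrow> q \<in> Classes \<Longrightarrow> \<exists>w\<in>WH3. conj_cls w p = q"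
proof -
  assume "p \<in> Classes" "q \<in> Classes"
  then obtain a b where ab: "a \<in> Refl" "b \<in> Refl" "p = cls_of a" "q = cls_of b" by (auto simp: Classes_def)
  obtain u where u: "u \<in> WH3" "a = wconj u (rmat 0)" using Refl_conjugate_rmat0[OF ab(1)] by blast
  obtain u' where u': "u' \<in> WH3" "b = wconj u' (rmat 0)" using Refl_conjugate_rmat0[OF ab(2)] by blast
  let ?w = "u' ** matrix_inv u"
  have w: "?w \<in> WH3" using WH3_mult WH3_inv u(1) u'(1) by blast
  have "wconj ?w a = b" using u u' WH3_inv[OF u(1)] by (simp add: wconj_comp wconj_inv_cancel)
  then show ?thesis using w conj_cls_cls_of[OF w ab(1)] ab by auto
qed

section \<open>The operators \<open>T4 w\<close> and \<open>E4 \<tau> s\<close> in coordinates\<close>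

definition coord_sum :: "vecU \<Rightarrow> complex" where "coord_sum v = (\<Sum>p\<in>Classes. v p)"

lemma T4_apply: "w \<in> WH3 \<Longrightarrow> T4 w v = (\<lambda>q. if q \<in> Classes then v (conj_cls (matrix_inv w) q) else 0)"
proof
  fix q assume w: "w \<in> WH3"
  show "T4 w v q = (if q \<in> Classes then v (conj_cls (matrix_inv w) q) else 0)"
  proof (cases "q \<in> Classes")
    case True
    have "(\<Sum>p\<in>Classes. v p * ubasis (conj_cls w p) q) = (\<Sum>p\<in>Classes. if p = conj_cls (matrix_inv w) q then v p else 0)"
    proof (rule sum.cong)
      fix p assume p: "p \<in> Classes"
      have "q = conj_cls w p \<longleftrightarrow> p = conj_cls (matrix_inv w) q"
        using conj_cls_inv_cancel[OF w p] conj_cls_cancel_inv[OF w True] by metis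
      then show "v p * ubasis (conj_cls w p) q = (if p = conj_cls (matrix_inv w) q then v p else 0)"
        by (auto simp: ubasis_def)
    qed simp
    also have "\<dots> = v (conj_cls (matrix_inv w) q)"
      using conj_cls_Classes[OF conjunct1[OF WH3_inv[OF w]] True] finite_Classes by simp
    finally show ?thesis using True unfolding T4_def lin_op_def by (simp add: conj_cls_def wconj_def)
  qed (simp add: T4_def lin_op_def)
qed

lemma E4_apply:
  "s \<in> Refl \<Longrightarrow> E4 \<tau> s v = (\<lambda>q. if q = cls_of s then (\<tau> - 1) * v (cls_of s) + coord_sum v else 0)"
proof
  fix q assume s: "s \<in> Refl"
  let ?c = "cls_of s"
  have summand: "v p * (if s \<in> p then (\<lambda>q. \<tau> * ubasis p q) else ubasis ?c) q
      = (if q = ?c then v p + (if p = ?c then (\<tau> - 1) * v p else 0) else 0)" if "p \<in> Classes" for p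
    using mem_Classes_iff[OF s that] by (auto simp: ubasis_def algebra_simps)
  show "E4 \<tau> s v q = (if q = ?c then (\<tau> - 1) * v ?c + coord_sum v else 0)"
  proof (cases "q \<in> Classes")
    case True
    then show ?thesis
      using cls_of_Classes[OF s] finite_Classes
      by (simp add: E4_def lin_op_def summand sum.distrib coord_sum_def cong: sum.cong)
  next
    case False
    then show ?thesis using cls_of_Classes[OF s] by (auto simp: E4_def lin_op_def)
  qed
qed

lemma coord_sum_T4: "w \<in> WH3 \<Longrightarrow> coord_sum (T4 w v) = coord_sum v"
proof -
  assume w: "w \<in> WH3"
  have iw: "matrix_inv w \<in> WH3" using WH3_inv[OF w] by simp
  have "coord_sum (T4 w v) = (\<Sum>q\<in>Classes. v (conj_cls (matrix_inv w) q))"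
    by (simp add: coord_sum_def T4_apply[OF w])
  also have "\<dots> = coord_sum v" unfolding coord_sum_def
    by (rule sum.reindex_bij_witness[of _ "conj_cls w" "conj_cls (matrix_inv w)"])
       (auto simp: conj_cls_inv_cancel[OF w] conj_cls_cancel_inv[OF w] conj_cls_Classes[OF w] conj_cls_Classes[OF iw])
  finally show ?thesis .
qed

lemma coord_sum_E4: "s \<in> Refl \<Longrightarrow> coord_sum (E4 \<tau> s v) = (\<tau> - 1) * v (cls_of s) + coord_sum v"
  using cls_of_Classes finite_Classes by (simp add: coord_sum_def E4_apply if_distrib cong: if_cong)

lemma T4_at_cls_of: "w \<in> WH3 \<Longrightarrow> s \<in> Refl \<Longrightarrow> T4 w v (cls_of (wconj w s)) = v (cls_of s)"
proof -
  assume w: "w \<in> WH3" and s: "s \<in> Refl"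
  have iw: "matrix_inv w \<in> WH3" using WH3_inv[OF w] by simp
  have "conj_cls (matrix_inv w) (cls_of (wconj w s)) = cls_of s"
    using conj_cls_cls_of[OF iw wconj_Refl[OF w s]] wconj_inv_cancel[OF w] by simp
  then show ?thesis using cls_of_Classes[OF wconj_Refl[OF w s]] by (simp add: T4_apply[OF w])
qed

lemma T4_ubasis: "w \<in> WH3 \<Longrightarrow> p \<in> Classes \<Longrightarrow> T4 w (ubasis p) = ubasis (conj_cls w p)"
proof
  fix q assume w: "w \<in> WH3" and p: "p \<in> Classes"
  have "q \<in> Classes \<Longrightarrow> conj_cls (matrix_inv w) q = p \<longleftrightarrow> q = conj_cls w p"
    using conj_cls_inv_cancel[OF w p] conj_cls_cancel_inv[OF w] by metis
  then show "T4 w (ubasis p) q = ubasis (conj_cls w p) q"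
    using conj_cls_Classes[OF w p] by (auto simp: T4_apply[OF w] ubasis_def)
qed

section \<open>The defining relations of \<open>B\<^sub>G(\<Upsilon>)\<close> hold in \<open>\<rho>\<^sub>4\<close>\<close>

lemma T4_Uspace: "T4 w v \<in> Uspace"
  by (simp add: Uspace_def T4_def lin_op_def)

lemma E4_Uspace: "E4 \<tau> s v \<in> Uspace"
  by (simp add: Uspace_def E4_def lin_op_def)

lemma T4_one: "v \<in> Uspace \<Longrightarrow> T4 (mat 1) v = v"
  by (auto simp: T4_apply[OF WH3.one] matrix_inv_one conj_cls_one Uspace_def)

lemma T4_mult: "w1 \<in> WH3 \<Longrightarrow> w2 \<in> WH3 \<Longrightarrow> T4 w1 (T4 w2 v) = T4 (w1 ** w2) v"
  by (rule ext) (simp add: T4_apply WH3_mult WH3_inv_mult conj_cls_comp WH3_inv conj_cls_Classes)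

lemma T4_E4_wconj: "w \<in> WH3 \<Longrightarrow> s \<in> Refl \<Longrightarrow> T4 w (E4 \<tau> s v) = E4 \<tau> (wconj w s) (T4 w v)"
proof
  fix q assume w: "w \<in> WH3" and s: "s \<in> Refl"
  have s': "wconj w s \<in> Refl" using wconj_Refl[OF w s] .
  have "q \<in> Classes \<Longrightarrow> conj_cls (matrix_inv w) q = cls_of s \<longleftrightarrow> q = cls_of (wconj w s)"
    using conj_cls_inv_cancel[OF w cls_of_Classes[OF s]] conj_cls_cancel_inv[OF w] conj_cls_cls_of[OF w s] by metis
  then show "T4 w (E4 \<tau> s v) q = E4 \<tau> (wconj w s) (T4 w v) q"
    unfolding T4_apply[OF w, where v="E4 \<tau> s v"] E4_apply[OF s'] T4_at_cls_of[OF w s] coord_sum_T4[OF w]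
    using cls_of_Classes[OF s'] by (auto simp: E4_apply[OF s])
qed

lemma E4_T4_centralizer:
  assumes w: "w \<in> WH3" and s: "s \<in> Refl" and c: "wconj w s = s"
  shows "E4 \<tau> s (T4 w v) = E4 \<tau> s v"
proof -
  have fixed: "T4 w v (cls_of s) = v (cls_of s)" using T4_at_cls_of[OF w s, of v] c by simp
  show ?thesis unfolding E4_apply[OF s] coord_sum_T4[OF w] fixed ..
qed

lemma T4_E4_centralizer: "w \<in> WH3 \<Longrightarrow> s \<in> Refl \<Longrightarrow> wconj w s = s \<Longrightarrow> T4 w (E4 \<tau> s v) = E4 \<tau> s v"
  using T4_E4_wconj E4_T4_centralizer by metis

lemma stabilizer_centralizes: "w \<in> WH3 \<Longrightarrow> s \<in> Refl \<Longrightarrow> stabilizes w (Hyp s) \<Longrightarrow> wconj w s = s"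
  using Fix_wconj[of w s] wconj_Refl[of w s] Refl_Fix_inj[of "wconj w s" s] by (simp add: stabilizes_def)

lemma E4_quadratic:
  assumes s: "s \<in> Refl"
  shows "E4 \<tau> s (E4 \<tau> s v) = (\<lambda>q. \<tau> * E4 \<tau> s v q)"
proof -
  let ?a = "(\<tau> - 1) * v (cls_of s) + coord_sum v"
  have at_cls: "E4 \<tau> s v (cls_of s) = ?a" by (simp add: E4_apply[OF s])
  have "E4 \<tau> s (E4 \<tau> s v) = (\<lambda>q. if q = cls_of s then (\<tau> - 1) * ?a + ?a else 0)"
    unfolding E4_apply[OF s, of \<tau> "E4 \<tau> s v"] coord_sum_E4[OF s] at_cls ..
  also have "\<dots> = (\<lambda>q. \<tau> * E4 \<tau> s v q)" by (intro ext) (simp add: E4_apply[OF s] algebra_simps)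
  finally show ?thesis .
qed

text \<open>Transversal hyperplanes belong to commuting reflections: otherwise \<open>s s' s\<close> would be a
  third reflection whose hyperplane contains \<open>H\<^sub>s \<inter> H\<^sub>s\<^sub>'\<close>.\<close>
lemma transversal_commute:
  assumes s: "s \<in> Refl" and s': "s' \<in> Refl" and tr: "transversal s s'"
  shows "s ** s' = s' ** s"
proof (rule ccontr)
  assume noncomm: "s ** s' \<noteq> s' ** s"
  let ?r = "s ** s' ** s"
  have r: "?r \<in> Refl" using wconj_Refl[OF Refl_WH3[OF s] s'] Refl_wconj_self[OF s] by simp
  have "Hyp s \<inter> Hyp s' \<subseteq> Hyp ?r"
    by (auto simp: Fix_def matrix_vector_mul_assoc[symmetric])
  then have "?r = s \<or> ?r = s'"
    using tr r Refl_Fix_inj[OF r s] Refl_Fix_inj[OF r s'] unfolding transversal_def by blast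
  moreover have "?r \<noteq> s"
  proof
    assume "?r = s"
    have "s' = (s ** s) ** s' ** (s ** s)" using Refl_involution[OF s] by simp
    also have "\<dots> = s ** ?r ** s" by (simp add: matrix_mul_assoc)
    also have "\<dots> = s" using \<open>?r = s\<close> Refl_involution[OF s] by (simp add: matrix_mul_assoc)
    finally show False using tr by (simp add: transversal_def)
  qed
  moreover have "?r \<noteq> s'"
  proof
    assume "?r = s'"
    then have "s' ** s = s ** s' ** (s ** s)" by (simp add: matrix_mul_assoc)
    then show False using noncomm Refl_involution[OF s] by simp
  qed
  ultimately show False by blast
qed

text \<open>Conversely distinct commuting reflections are transversal (by the certified edge vectors);
  hence a noncrossing edge is spanned by noncommuting reflections.\<close>
lemma commute_transversal:
  assumes s: "s \<in> Refl" and s': "s' \<in> Refl" and ne: "s \<noteq> s'" and comm: "s ** s' = s' ** s"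
  shows "transversal s s'"
proof -
  obtain i j where ij: "i < 15" "j < 15" "s = rmat i" "s' = rmat j" using Refl_cases s s' by metis
  have "i \<noteq> j" "conj_table!i!j = j" using ne comm rmat_commute_iff[OF ij(1,2)] ij by auto
  then obtain e where e: "rmat i *v e = e" "rmat j *v e = e"
    and off: "\<And>k. k < 15 \<Longrightarrow> k \<noteq> i \<Longrightarrow> k \<noteq> j \<Longrightarrow> rmat k *v e \<noteq> e"
    using rmat_edge[OF ij(1,2)] by blast
  show ?thesis unfolding transversal_def
  proof (intro conjI ballI impI)
    show "Hyp s \<noteq> Hyp s'" using Refl_Fix_inj[OF s s'] ne by blast
    fix r assume r: "r \<in> Refl" and sub: "Hyp s \<inter> Hyp s' \<subseteq> Hyp r"
    obtain k where k: "k < 15" "r = rmat k" using Refl_cases r by metis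
    have "rmat k *v e = e" using e sub k ij by (auto simp: Fix_def)
    then show "Hyp r = Hyp s \<or> Hyp r = Hyp s'" using off k ij by blast
  qed
qed

lemma noncrossing_not_commute:
  "s \<in> Refl \<Longrightarrow> s' \<in> Refl \<Longrightarrow> s \<noteq> s' \<Longrightarrow> noncrossing_edge (Hyp s \<inter> Hyp s') \<Longrightarrow> s ** s' \<noteq> s' ** s"
  using commute_transversal unfolding noncrossing_edge_def crossing_edge_def by blast

lemma Rset_singleton:
  assumes s: "s \<in> Refl" and s': "s' \<in> Refl" and ne: "s \<noteq> s'" and noncomm: "s ** s' \<noteq> s' ** s"
  obtains r0 where "r0 \<in> Refl" "Rset s s' = {r0}" "r0 ** s' ** r0 = s"
proof -
  obtain i j where ij: "i < 15" "j < 15" "s = rmat i" "s' = rmat j" using Refl_cases s s' by metis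
  have "i \<noteq> j" "conj_table!i!j \<noteq> j" using ne noncomm rmat_commute_iff[OF ij(1,2)] ij by auto
  note c = conjugator_unique[OF ij(1,2) this]
  let ?k = "conjugator!i!j"
  have conj: "rmat ?k ** s' ** rmat ?k = s" using c rmat_conj_table[of ?k j] ij by simp
  have "Rset s s' = {rmat ?k}"
  proof
    show "Rset s s' \<subseteq> {rmat ?k}"
    proof
      fix r assume "r \<in> Rset s s'"
      then have r: "r \<in> Refl" "r ** s' ** r = s" by (auto simp: Rset_def)
      obtain k where k: "k < 15" "r = rmat k" using Refl_cases r(1) by metis
      have "rmat (conj_table!k!j) = rmat i" using rmat_conj_table[OF k(1) ij(2)] r(2) k ij by simp
      then have "conj_table!k!j = i" using rmat_inj conj_table_lt[OF k(1) ij(2)] ij(1) by blast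
      then show "r \<in> {rmat ?k}" using c k by auto
    qed
    show "{rmat ?k} \<subseteq> Rset s s'" using conj c rmat_Refl[of ?k] by (auto simp: Rset_def)
  qed
  then show ?thesis using that conj c rmat_Refl[of ?k] by blast
qed

lemma E4_E4_conjugate:
  assumes s: "s \<in> Refl" and s': "s' \<in> Refl" and r0: "r0 \<in> Refl" "r0 ** s' ** r0 = s"
    and ncls: "cls_of s \<noteq> cls_of s'"
  shows "E4 \<tau> s (E4 \<tau> s' v) = E4 \<tau> s (T4 r0 v)" and "T4 r0 (E4 \<tau> s' v) = E4 \<tau> s (T4 r0 v)"
proof -
  have w0: "r0 \<in> WH3" using Refl_WH3[OF r0(1)] .
  have conj: "wconj r0 s' = s" using r0 Refl_wconj_self by simp
  have vanish: "E4 \<tau> s' v (cls_of s) = 0" using ncls by (simp add: E4_apply[OF s'])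
  have moved: "T4 r0 v (cls_of s) = v (cls_of s')" using T4_at_cls_of[OF w0 s', of v] conj by simp
  show "E4 \<tau> s (E4 \<tau> s' v) = E4 \<tau> s (T4 r0 v)"
    unfolding E4_apply[OF s] coord_sum_E4[OF s'] coord_sum_T4[OF w0] vanish moved by (intro ext) simp
  show "T4 r0 (E4 \<tau> s' v) = E4 \<tau> s (T4 r0 v)" using T4_E4_wconj[OF w0 s'] conj by simp
qed

theorem is_rep_T4_E4: "is_rep \<tau> T4 (E4 \<tau>)"
  unfolding is_rep_def
proof (intro conjI ballI impI allI)
  fix w s v assume w: "w \<in> WH3" and s: "s \<in> Refl" and "stabilizes w (Hyp s) \<and> noncrossing_edge (Hyp s \<inter> Fix w)"
  then have "wconj w s = s" using stabilizer_centralizes by blast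
  then show "T4 w (E4 \<tau> s v) = E4 \<tau> s v" "E4 \<tau> s (T4 w v) = E4 \<tau> s v"
    using T4_E4_centralizer[OF w s] E4_T4_centralizer[OF w s] by auto
next
  fix s v assume s: "s \<in> Refl"
  have "wconj s s = s" using Refl_involution[OF s] by (simp add: Refl_wconj_self[OF s])
  then show "T4 s (E4 \<tau> s v) = E4 \<tau> s v" "E4 \<tau> s (T4 s v) = E4 \<tau> s v"
    using T4_E4_centralizer E4_T4_centralizer Refl_WH3[OF s] s by auto
next
  fix s s' v assume s: "s \<in> Refl" and s': "s' \<in> Refl" and "transversal s s'"
  then have "cls_of s = cls_of s'" using cls_of_eq_iff transversal_commute by blast
  then have "E4 \<tau> s = E4 \<tau> s'" using s s' by (intro ext) (simp add: E4_apply)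
  then show "E4 \<tau> s (E4 \<tau> s' v) = E4 \<tau> s' (E4 \<tau> s v)" by simp
next
  fix s s' v assume s: "s \<in> Refl" and s': "s' \<in> Refl" and "s \<noteq> s' \<and> noncrossing_edge (Hyp s \<inter> Hyp s')"
  then have noncomm: "s ** s' \<noteq> s' ** s" using noncrossing_not_commute by blast
  moreover have "s \<noteq> s'" using \<open>s \<noteq> s' \<and> _\<close> by blast
  ultimately obtain r0 where r0: "r0 \<in> Refl" "Rset s s' = {r0}" "r0 ** s' ** r0 = s"
    using Rset_singleton[OF s s'] by blast
  have "cls_of s \<noteq> cls_of s'" using cls_of_eq_iff[OF s s'] noncomm by simp
  note e = E4_E4_conjugate[OF s s' r0(1,3) this]
  show "E4 \<tau> s (E4 \<tau> s' v) = (\<lambda>q. \<Sum>r\<in>Rset s s'. T4 r (E4 \<tau> s' v) q)"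
    "E4 \<tau> s (E4 \<tau> s' v) = E4 \<tau> s (\<lambda>q. \<Sum>r\<in>Rset s s'. T4 r v q)"
    using e r0(2) by simp_all
qed (simp_all add: T4_Uspace E4_Uspace T4_one T4_mult E4_quadratic T4_E4_wconj[unfolded wconj_def])

section \<open>Irreducibility\<close>

definition invariant_subspace ::
    "(mat3 \<Rightarrow> vecU \<Rightarrow> vecU) \<Rightarrow> (mat3 \<Rightarrow> vecU \<Rightarrow> vecU) \<Rightarrow> vecU set \<Rightarrow> bool" where
  "invariant_subspace T E W \<longleftrightarrow> csubspace W \<and> W \<subseteq> Uspace \<and>
     (\<forall>w\<in>WH3. \<forall>v\<in>W. T w v \<in> W) \<and> (\<forall>s\<in>Refl. \<forall>v\<in>W. E s v \<in> W)"

lemma rep_irreducible_iff: "rep_irreducible T E \<longleftrightarrow>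
    Uspace \<noteq> {\<lambda>_. 0} \<and> (\<forall>W. invariant_subspace T E W \<longrightarrow> W = {\<lambda>_. 0} \<or> W = Uspace)"
  by (simp add: rep_irreducible_def invariant_subspace_def)

lemma proper_invariant_not_irreducible:
  "invariant_subspace T E W \<Longrightarrow> W \<noteq> {\<lambda>_. 0} \<Longrightarrow> W \<noteq> Uspace \<Longrightarrow> \<not> rep_irreducible T E"
  by (auto simp: rep_irreducible_iff)

lemma ubasis_Uspace: "p \<in> Classes \<Longrightarrow> ubasis p \<in> Uspace"
  by (auto simp: Uspace_def ubasis_def)

lemma ubasis_nonzero: "ubasis p \<noteq> (\<lambda>_. 0)"
proof
  assume "ubasis p = (\<lambda>_. 0)"
  then have "ubasis p p = 0" by (rule fun_cong)
  then show False by (simp add: ubasis_def)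
qed

lemma two_Classes: obtains p1 p2 where "p1 \<in> Classes" "p2 \<in> Classes" "p1 \<noteq> p2"
proof -
  obtain p1 where p1: "p1 \<in> Classes" using card_Classes by fastforce
  have "card (Classes - {p1}) = 4" using card_Classes p1 finite_Classes by simp
  then have "Classes - {p1} \<noteq> {}" by (metis card.empty zero_neq_numeral)
  then obtain p2 where "p2 \<in> Classes - {p1}" by blast
  then show ?thesis using that p1 by blast
qed

lemma csubspace_lincomb:
  assumes W: "csubspace W" and "finite F" and "\<forall>p\<in>F. f p \<in> W"
  shows "(\<lambda>q. \<Sum>p\<in>F. c p * f p q) \<in> W"
  using assms(2,3)
proof (induction F rule: finite_induct)
  case empty then show ?case using W by (simp add: csubspace_def)
next
  case (insert x F)
  then have "(\<lambda>q. c x * f x q) \<in> W" "(\<lambda>q. \<Sum>p\<in>F. c p * f p q) \<in> W" using W by (simp_all add: csubspace_def)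
  then show ?case using W insert.hyps unfolding csubspace_def by simp
qed

lemma Uspace_ubasis_expansion: "v \<in> Uspace \<Longrightarrow> (\<lambda>q. \<Sum>p\<in>Classes. v p * ubasis p q) = v"
proof
  fix q assume v: "v \<in> Uspace"
  show "(\<Sum>p\<in>Classes. v p * ubasis p q) = v q"
  proof (cases "q \<in> Classes")
    case True
    have "(\<Sum>p\<in>Classes. v p * ubasis p q) = (\<Sum>p\<in>Classes. if p = q then v p else 0)"
      by (rule sum.cong) (auto simp: ubasis_def)
    then show ?thesis using True finite_Classes by simp
  qed (use v in \<open>auto simp: Uspace_def ubasis_def intro!: sum.neutral\<close>)
qed

lemma csubspace_ubasis_Uspace:
  assumes "csubspace W" and "\<forall>p\<in>Classes. ubasis p \<in> W"
  shows "Uspace \<subseteq> W"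
proof
  fix v assume "v \<in> Uspace"
  have "(\<lambda>q. \<Sum>p\<in>Classes. v p * ubasis p q) \<in> W"
    using csubspace_lincomb[OF assms(1) finite_Classes assms(2)] .
  then show "v \<in> W" using Uspace_ubasis_expansion[OF \<open>v \<in> Uspace\<close>] by simp
qed

text \<open>Since the group permutes the basis vectors transitively, an invariant subspace containing
  one of them is everything.\<close>
lemma invariant_ubasis_Uspace:
  assumes W: "invariant_subspace T4 E W" and p: "p \<in> Classes" "ubasis p \<in> W"
  shows "W = Uspace"
proof -
  have "ubasis q \<in> W" if q: "q \<in> Classes" for q
  proof -
    obtain w where w: "w \<in> WH3" "conj_cls w p = q" using Classes_transitive[OF p(1) q] by blast
    then have "T4 w (ubasis p) \<in> W" using W p by (auto simp: invariant_subspace_def)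
    then show ?thesis using T4_ubasis[OF w(1) p(1)] w by simp
  qed
  moreover have "csubspace W" "W \<subseteq> Uspace" using W by (auto simp: invariant_subspace_def)
  ultimately show ?thesis using csubspace_ubasis_Uspace by blast
qed

lemma E4_scaled_ubasis: "s \<in> Refl \<Longrightarrow>
    E4 \<tau> s v = (\<lambda>q. ((\<tau> - 1) * v (cls_of s) + coord_sum v) * ubasis (cls_of s) q)"
  by (rule ext) (simp add: E4_apply ubasis_def)

text \<open>A vector killed by every \<open>e\<^sub>s\<close> satisfies \<open>(\<tau> - 1) v\<^sub>p = - \<Sum> v\<close> for all \<open>p\<close>; summing over
  the five classes gives \<open>(\<tau> + 4) \<Sum> v = 0\<close>.\<close>
lemma common_kernel_E4:
  assumes t1: "\<tau> \<noteq> 1" and t4: "\<tau> \<noteq> -4" and v: "v \<in> Uspace"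
    and kernel: "\<forall>p\<in>Classes. (\<tau> - 1) * v p + coord_sum v = 0"
  shows "v = (\<lambda>_. 0)"
proof -
  have "(\<Sum>p\<in>Classes. (\<tau> - 1) * v p + coord_sum v) = (\<tau> - 1) * coord_sum v + 5 * coord_sum v"
    by (simp add: sum.distrib coord_sum_def sum_distrib_left card_Classes)
  moreover have "(\<Sum>p\<in>Classes. (\<tau> - 1) * v p + coord_sum v) = 0" using kernel by simp
  ultimately have "(\<tau> + 4) * coord_sum v = 0" by (simp add: algebra_simps)
  moreover have "\<tau> + 4 \<noteq> 0" using t4 eq_neg_iff_add_eq_0[of \<tau> 4] by blast
  ultimately have "coord_sum v = 0" by simp
  then have "v p = 0" if "p \<in> Classes" for p using kernel that t1 by simp
  then show ?thesis using v by (auto simp: Uspace_def)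
qed

lemma irreducible_generic:
  assumes t1: "\<tau> \<noteq> 1" and t4: "\<tau> \<noteq> -4"
  shows "rep_irreducible T4 (E4 \<tau>)"
  unfolding rep_irreducible_iff
proof (intro conjI allI impI)
  obtain p where "p \<in> Classes" using two_Classes by metis
  then show "Uspace \<noteq> {\<lambda>_. 0}" using ubasis_Uspace ubasis_nonzero by blast
  fix W assume W: "invariant_subspace T4 (E4 \<tau>) W"
  have "W = Uspace" if "W \<noteq> {\<lambda>_. 0}"
  proof -
    note that
    moreover have "(\<lambda>_. 0) \<in> W" using W by (simp add: invariant_subspace_def csubspace_def)
    ultimately obtain v where v: "v \<in> W" "v \<noteq> (\<lambda>_. 0)" by blast
    then have "v \<in> Uspace" using W by (auto simp: invariant_subspace_def)
    then have "\<exists>p\<in>Classes. (\<tau> - 1) * v p + coord_sum v \<noteq> 0"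
      using common_kernel_E4[OF t1 t4] v(2) by blast
    then obtain s where s: "s \<in> Refl" and a: "(\<tau> - 1) * v (cls_of s) + coord_sum v \<noteq> 0"
      by (auto simp: Classes_def)
    let ?a = "(\<tau> - 1) * v (cls_of s) + coord_sum v"
    have "E4 \<tau> s v \<in> W" using W s v(1) by (auto simp: invariant_subspace_def)
    then have "(\<lambda>q. inverse ?a * E4 \<tau> s v q) \<in> W" using W by (simp add: invariant_subspace_def csubspace_def)
    moreover have "(\<lambda>q. inverse ?a * E4 \<tau> s v q) = ubasis (cls_of s)"
      using a by (simp add: E4_scaled_ubasis[OF s] mult.assoc[symmetric])
    ultimately have "ubasis (cls_of s) \<in> W" by simp
    then show "W = Uspace" using invariant_ubasis_Uspace[OF W cls_of_Classes[OF s]] by blast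
  qed
  then show "W = {\<lambda>_. 0} \<or> W = Uspace" by blast
qed

text \<open>For \<open>\<tau> = 1\<close> every \<open>e\<^sub>s\<close> kills the sum-zero hyperplane of \<open>U\<close>, which is \<open>W\<close>-stable.\<close>
lemma sum_zero_invariant: "invariant_subspace T4 (E4 1) {v \<in> Uspace. coord_sum v = 0}"
  unfolding invariant_subspace_def
proof (intro conjI ballI)
  show "csubspace {v \<in> Uspace. coord_sum v = 0}"
    unfolding csubspace_def coord_sum_def Uspace_def by (auto simp: sum.distrib sum_distrib_left[symmetric])
  fix s v assume "s \<in> Refl" "v \<in> {v \<in> Uspace. coord_sum v = 0}"
  then show "E4 1 s v \<in> {v \<in> Uspace. coord_sum v = 0}"
    by (simp add: E4_Uspace coord_sum_E4)
qed (auto simp: T4_Uspace coord_sum_T4)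

lemma not_irreducible_at_1: "\<not> rep_irreducible T4 (E4 1)"
proof -
  obtain p1 p2 where p: "p1 \<in> Classes" "p2 \<in> Classes" "p1 \<noteq> p2" using two_Classes by blast
  let ?d = "\<lambda>q. ubasis p1 q - ubasis p2 q"
  have "?d \<in> Uspace" "coord_sum ?d = 0"
    using p finite_Classes by (auto simp: Uspace_def ubasis_def coord_sum_def sum_subtractf)
  moreover have "?d \<noteq> (\<lambda>_. 0)"
  proof
    assume "?d = (\<lambda>_. 0)"
    then have "?d p1 = 0" by (rule fun_cong)
    then show False using p(3) by (simp add: ubasis_def)
  qed
  ultimately have nonzero: "{v \<in> Uspace. coord_sum v = 0} \<noteq> {\<lambda>_. 0}" by blast
  have "coord_sum (ubasis p1) \<noteq> 0" using p(1) finite_Classes by (simp add: coord_sum_def ubasis_def)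
  then have "{v \<in> Uspace. coord_sum v = 0} \<noteq> Uspace" using ubasis_Uspace[OF p(1)] by blast
  then show ?thesis using proper_invariant_not_irreducible[OF sum_zero_invariant nonzero] by blast
qed

text \<open>For \<open>\<tau> = -4\<close> every \<open>e\<^sub>s\<close> kills the line of constant vectors, which is \<open>W\<close>-stable.\<close>
definition const_vec :: "complex \<Rightarrow> vecU" where "const_vec c = (\<lambda>q. if q \<in> Classes then c else 0)"

lemma constants_invariant: "invariant_subspace T4 (E4 (-4)) (range const_vec)"
  unfolding invariant_subspace_def
proof (intro conjI ballI)
  show "csubspace (range const_vec)"
    unfolding csubspace_def
  proof (intro conjI ballI allI)
    show "(\<lambda>_. 0) \<in> range const_vec" by (rule range_eqI[of _ _ 0]) (simp add: const_vec_def)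
    show "(\<lambda>q. x q + y q) \<in> range const_vec" if x: "x \<in> range const_vec" and y: "y \<in> range const_vec" for x y
    proof -
      obtain a b where "x = const_vec a" "y = const_vec b" using x y by blast
      then have "(\<lambda>q. x q + y q) = const_vec (a + b)" by (auto simp: const_vec_def)
      then show ?thesis by (simp add: rangeI)
    qed
    show "(\<lambda>q. c * x q) \<in> range const_vec" if x: "x \<in> range const_vec" for c x
    proof -
      obtain a where "x = const_vec a" using x by blast
      then have "(\<lambda>q. c * x q) = const_vec (c * a)" by (auto simp: const_vec_def)
      then show ?thesis by (simp add: rangeI)
    qed
  qed
  show "range const_vec \<subseteq> Uspace" by (auto simp: const_vec_def Uspace_def)
  fix w v assume w: "w \<in> WH3" and "v \<in> range const_vec"
  then obtain c where "v = const_vec c" by auto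
  then have "T4 w v = const_vec c"
    using conj_cls_Classes[OF conjunct1[OF WH3_inv[OF w]]] by (auto simp: T4_apply[OF w] const_vec_def)
  then show "T4 w v \<in> range const_vec" by simp
next
  fix s v assume s: "s \<in> Refl" and "v \<in> range const_vec"
  then obtain c where c: "v = const_vec c" by auto
  have "coord_sum v = 5 * c" using card_Classes by (simp add: c coord_sum_def const_vec_def)
  then have "E4 (-4) s v = const_vec 0"
    using cls_of_Classes[OF s] c by (auto simp: E4_apply[OF s] const_vec_def)
  then show "E4 (-4) s v \<in> range const_vec" by simp
qed

lemma not_irreducible_at_minus4: "\<not> rep_irreducible T4 (E4 (-4))"
proof -
  obtain p1 p2 where p: "p1 \<in> Classes" "p2 \<in> Classes" "p1 \<noteq> p2" using two_Classes by blast
  have "const_vec 1 p1 \<noteq> 0" using p(1) by (simp add: const_vec_def)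
  then have nonzero: "range const_vec \<noteq> {\<lambda>_. 0}" by (metis rangeI singletonD)
  have "ubasis p1 \<notin> range const_vec"
  proof
    assume "ubasis p1 \<in> range const_vec"
    then obtain c where "ubasis p1 = const_vec c" by auto
    then have "ubasis p1 p1 = ubasis p1 p2" using p by (simp add: const_vec_def)
    then show False using p(3) by (simp add: ubasis_def)
  qed
  then have "range const_vec \<noteq> Uspace" using ubasis_Uspace[OF p(1)] by blast
  then show ?thesis using proper_invariant_not_irreducible[OF constants_invariant nonzero] by blast
qed

lemma nonvanishing_iff: "(\<tau> - 1) ^ 4 * (\<tau> + 4) \<noteq> 0 \<longleftrightarrow> \<tau> \<noteq> 1 \<and> \<tau> \<noteq> (-4::complex)"
  using eq_neg_iff_add_eq_0[of \<tau> 4] by auto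

theorem lemma7p3:
  fixes \<tau> :: complex
  shows "is_rep \<tau> T4 (E4 \<tau>) \<and>
         (rep_irreducible T4 (E4 \<tau>) \<longleftrightarrow> (\<tau> - 1) ^ 4 * (\<tau> + 4) \<noteq> 0)"
  unfolding nonvanishing_iff
  using is_rep_T4_E4 irreducible_generic not_irreducible_at_1 not_irreducible_at_minus4 by blast

end
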